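(* Let $(M,d)$ be a complete pointed metric space and $f\in\mathrm{Lip}_0(M,M)$. Then $\widehat f$ is a rigid operator on $\mathcal F(M)$ if and only if there exist an increasing sequence $(n(k))_k\subset\mathbb N$ and a constant $C\ge0$ such that $\mathrm{Lip}(f^{n(k)})\le C$ for all $k$ and $f^{n(k)}(x)\to x$ as $k\to\infty$ for all $x\in M$.
   Context: A pointed metric space is a metric space with a distinguished point $0$. $\mathrm{Lip}_0(M,M)$ denotes the Lipschitz maps $f:M\to M$ with $f(0)=0$, $\mathrm{Lip}(f)$ the least Lipschitz constant; $\mathrm{Lip}_0(M)$ the real-valued Lipschitz functions vanishing at $0$ normed by $\mathrm{Lip}$. $\delta:M\to\mathrm{Lip}_0(M)^*$, $\delta(x)(\varphi)=\varphi(x)$; $\mathcal F(M)$ is the norm-closed linear span of $\delta(M)$. $\widehat f$ is the unique bounded linear operator on $\mathcal F(M)$ with $\widehat f(\delta(x))=\delta(f(x))$. A bounded linear operator $T$ on a Banach space $X$ is rigid if there is an increasing sequence $(n(j))_j\subset\mathbb N$ with $T^{n(j)}x\to x$ for every $x\in X$. *)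

theory Defs
  imports "HOL-Analysis.Analysis"
begin

text \<open>Pointed metric space: a type of class metric_space together with a base point z.\<close>

definition Lip :: "('a::metric_space \<Rightarrow> 'b::metric_space) \<Rightarrow> real" where
  "Lip g = Inf {L. L-lipschitz_on UNIV g}"

definition Lip0_maps :: "'a::metric_space \<Rightarrow> ('a \<Rightarrow> 'a) set" where
  "Lip0_maps z = {g. g z = z \<and> (\<exists>L. L-lipschitz_on UNIV g)}"

definition Lip0 :: "'a::metric_space \<Rightarrow> ('a \<Rightarrow> real) set" where
  "Lip0 z = {\<phi>. \<phi> z = 0 \<and> (\<exists>L. L-lipschitz_on UNIV \<phi>)}"

text \<open>Functionals on Lip0 z are represented as functions on all of 'a => real that
  vanish outside Lip0 z (so that they are determined by their values on Lip0 z).\<close>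

definition dual_norm :: "'a::metric_space \<Rightarrow> (('a \<Rightarrow> real) \<Rightarrow> real) \<Rightarrow> real" where
  "dual_norm z \<Lambda> = Sup {\<bar>\<Lambda> \<phi>\<bar> | \<phi>. \<phi> \<in> Lip0 z \<and> Lip \<phi> \<le> 1}"

definition Lip0_dual :: "'a::metric_space \<Rightarrow> (('a \<Rightarrow> real) \<Rightarrow> real) set" where
  "Lip0_dual z = {\<Lambda>. (\<forall>\<phi>. \<phi> \<notin> Lip0 z \<longrightarrow> \<Lambda> \<phi> = 0)
     \<and> (\<forall>\<phi>\<in>Lip0 z. \<forall>\<psi>\<in>Lip0 z. \<forall>a b. \<Lambda> (\<lambda>x. a * \<phi> x + b * \<psi> x) = a * \<Lambda> \<phi> + b * \<Lambda> \<psi>)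
     \<and> (\<exists>B. \<forall>\<phi>\<in>Lip0 z. \<bar>\<Lambda> \<phi>\<bar> \<le> B * Lip \<phi>)}"

definition delta :: "'a::metric_space \<Rightarrow> 'a \<Rightarrow> (('a \<Rightarrow> real) \<Rightarrow> real)" where
  "delta z x = (\<lambda>\<phi>. if \<phi> \<in> Lip0 z then \<phi> x else 0)"

definition delta_span :: "'a::metric_space \<Rightarrow> (('a \<Rightarrow> real) \<Rightarrow> real) set" where
  "delta_span z = {\<mu>. \<exists>S a. finite S \<and> \<mu> = (\<lambda>\<phi>. \<Sum>x\<in>S. a x * delta z x \<phi>)}"

definition free_space :: "'a::metric_space \<Rightarrow> (('a \<Rightarrow> real) \<Rightarrow> real) set" where
  "free_space z = {\<Lambda> \<in> Lip0_dual z. \<forall>\<epsilon>>0. \<exists>\<mu>\<in>delta_span z.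
      dual_norm z (\<lambda>\<phi>. \<Lambda> \<phi> - \<mu> \<phi>) < \<epsilon>}"

text \<open>The linearization hat f: the unique bounded linear operator on F(M) with
  hat f (delta x) = delta (f x) (extended by 0 outside F(M), to make it unique
  as a HOL function).\<close>
definition hat :: "'a::metric_space \<Rightarrow> ('a \<Rightarrow> 'a) \<Rightarrow> (('a \<Rightarrow> real) \<Rightarrow> real) \<Rightarrow> (('a \<Rightarrow> real) \<Rightarrow> real)" where
  "hat z f = (THE T.
      (\<forall>\<Lambda>\<in>free_space z. T \<Lambda> \<in> free_space z)
    \<and> (\<forall>\<Lambda>\<in>free_space z. \<forall>\<Gamma>\<in>free_space z. \<forall>a b.
          T (\<lambda>\<phi>. a * \<Lambda> \<phi> + b * \<Gamma> \<phi>) = (\<lambda>\<phi>. a * T \<Lambda> \<phi> + b * T \<Gamma> \<phi>))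
    \<and> (\<exists>B. \<forall>\<Lambda>\<in>free_space z. dual_norm z (T \<Lambda>) \<le> B * dual_norm z \<Lambda>)
    \<and> (\<forall>x. T (delta z x) = delta z (f x))
    \<and> (\<forall>\<Lambda>. \<Lambda> \<notin> free_space z \<longrightarrow> T \<Lambda> = (\<lambda>\<phi>. 0)))"

definition rigid_on :: "'v set \<Rightarrow> ('v \<Rightarrow> 'v \<Rightarrow> real) \<Rightarrow> ('v \<Rightarrow> 'v) \<Rightarrow> bool" where
  "rigid_on X d T \<longleftrightarrow> (\<exists>n::nat \<Rightarrow> nat. strict_mono n \<and>
      (\<forall>x\<in>X. (\<lambda>j. d ((T ^^ n j) x) x) \<longlonglongrightarrow> 0))"

definition free_dist :: "'a::metric_space \<Rightarrow> (('a \<Rightarrow> real) \<Rightarrow> real) \<Rightarrow> (('a \<Rightarrow> real) \<Rightarrow> real) \<Rightarrow> real" where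
  "free_dist z \<Lambda> \<Gamma> = dual_norm z (\<lambda>\<phi>. \<Lambda> \<phi> - \<Gamma> \<phi>)"

end

theory Submission
  imports Defs
begin

text \<open>The iterates of \<open>hat z f\<close> act on the free space by pushforward:
  \<open>(hat z f ^^ n) \<Lambda> = pushforward z (f ^^ n) \<Lambda>\<close>, where \<open>pushforward z g \<Lambda>\<close> maps \<open>\<phi>\<close> to
  \<open>\<Lambda> (\<phi> \<circ> g)\<close> and has norm at most \<open>Lip g\<close>. If these pushforwards tend to the identity
  along \<open>n k\<close>, testing them on Dirac functionals gives \<open>(f ^^ n k) x \<longlonglongrightarrow> x\<close>, since \<open>delta z\<close>
  is an isometry; and the uniform boundedness principle, i.e. Baire's theorem in the complete
  free space, bounds \<open>Lip (f ^^ n k)\<close>: a ball on which all the pushforwards are bounded can be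
  perturbed in the direction \<open>delta z x - delta z y\<close>. Conversely, equi-Lipschitz maps converging
  pointwise make the pushforwards converge on finite combinations of Dirac functionals, hence,
  by equicontinuity, on their closure.\<close>

section \<open>Lipschitz constants\<close>

lemma
  assumes "L-lipschitz_on UNIV g"
  shows lipschitz_on_Lip: "(Lip g)-lipschitz_on UNIV g"
    and Lip_le: "Lip g \<le> L"
    and Lip_nonneg: "0 \<le> Lip g"
proof -
  let ?S = "{L. L-lipschitz_on UNIV g}"
  have ne: "?S \<noteq> {}" using assms by blast
  have "bdd_below ?S" by (rule bdd_belowI[of _ 0]) (auto dest: lipschitz_on_nonneg)
  then show "Lip g \<le> L" unfolding Lip_def using assms by (intro cInf_lower) auto
  show nn: "0 \<le> Lip g" unfolding Lip_def using ne by (intro cInf_greatest) (auto dest: lipschitz_on_nonneg)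
  show "(Lip g)-lipschitz_on UNIV g"
  proof (rule lipschitz_onI[OF _ nn])
    fix x y :: 'a
    show "dist (g x) (g y) \<le> Lip g * dist x y"
    proof (cases "x = y")
      case False
      then have dp: "dist x y > 0" by simp
      have "dist (g x) (g y) / dist x y \<le> Lip g" unfolding Lip_def
      proof (rule cInf_greatest[OF ne])
        fix L' assume "L' \<in> ?S"
        then have "dist (g x) (g y) \<le> L' * dist x y" by (auto dest: lipschitz_onD)
        then show "dist (g x) (g y) / dist x y \<le> L'" using dp by (simp add: divide_le_eq)
      qed
      then show ?thesis using dp by (simp add: divide_le_eq)
    qed simp
  qed
qed

lemma Lip0_maps_funpow:
  assumes "f \<in> Lip0_maps z"
  shows "f ^^ n \<in> Lip0_maps z"
proof (induction n)
  case 0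
  then show ?case unfolding Lip0_maps_def by (auto intro: lipschitz_on_id[unfolded id_def])
next
  case (Suc n)
  from Suc obtain L where L: "L-lipschitz_on UNIV (f ^^ n)" "(f ^^ n) z = z"
    unfolding Lip0_maps_def by auto
  from assms obtain K where K: "K-lipschitz_on UNIV f" "f z = z"
    unfolding Lip0_maps_def by auto
  have "(K * L)-lipschitz_on UNIV (f \<circ> f ^^ n)"
    by (rule lipschitz_on_compose[OF L(1)]) (rule lipschitz_on_subset[OF K(1)], simp)
  then show ?case using L K unfolding Lip0_maps_def by auto
qed

lemma Lip0_maps_Lip_nonneg: "g \<in> Lip0_maps z \<Longrightarrow> 0 \<le> Lip g"
  unfolding Lip0_maps_def using Lip_nonneg by blast

lemma Lip0_lincomb:
  assumes "\<phi> \<in> Lip0 z" "\<psi> \<in> Lip0 z"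
  shows "(\<lambda>x. a * \<phi> x + b * \<psi> x) \<in> Lip0 z"
proof -
  obtain L K where "L-lipschitz_on UNIV \<phi>" "K-lipschitz_on UNIV \<psi>" "\<phi> z = 0" "\<psi> z = 0"
    using assms unfolding Lip0_def by auto
  then show ?thesis unfolding Lip0_def
    by (auto intro!: exI lipschitz_on_add lipschitz_on_cmult_real)
qed

lemma
  assumes "\<phi> \<in> Lip0 z" "g \<in> Lip0_maps z"
  shows Lip0_comp: "\<phi> \<circ> g \<in> Lip0 z"
    and Lip_comp_le: "Lip (\<phi> \<circ> g) \<le> Lip \<phi> * Lip g"
proof -
  obtain L K where L: "L-lipschitz_on UNIV \<phi>" "\<phi> z = 0" and K: "K-lipschitz_on UNIV g" "g z = z"
    using assms unfolding Lip0_def Lip0_maps_def by auto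
  have "(Lip \<phi> * Lip g)-lipschitz_on UNIV (\<phi> \<circ> g)"
    by (rule lipschitz_on_compose[OF lipschitz_on_Lip[OF K(1)]])
       (rule lipschitz_on_subset[OF lipschitz_on_Lip[OF L(1)]], simp)
  then show "\<phi> \<circ> g \<in> Lip0 z" "Lip (\<phi> \<circ> g) \<le> Lip \<phi> * Lip g"
    using L K unfolding Lip0_def by (auto intro: Lip_le)
qed

lemma
  fixes z :: "'a::metric_space"
  shows Lip0_zero: "(\<lambda>x. 0) \<in> Lip0 z"
    and Lip_zero: "Lip (\<lambda>x::'a. 0::real) = 0"
proof -
  have l: "0-lipschitz_on (UNIV::'a set) (\<lambda>x. 0::real)" by (rule lipschitz_on_constant)
  then show "(\<lambda>x. 0) \<in> Lip0 z" unfolding Lip0_def by auto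
  show "Lip (\<lambda>x::'a. 0::real) = 0" using Lip_le[OF l] Lip_nonneg[OF l] by simp
qed

lemma
  fixes z y :: "'a::metric_space"
  shows Lip0_dist: "(\<lambda>x. dist x y - dist z y) \<in> Lip0 z"
    and Lip_dist_le: "Lip (\<lambda>x. dist x y - dist z y) \<le> 1"
proof -
  have "1-lipschitz_on UNIV (\<lambda>x. dist x y - dist z y)"
  proof (rule lipschitz_onI)
    fix a b :: 'a
    have "\<bar>dist a y - dist y b\<bar> \<le> dist a b" by (rule abs_dist_diff_le)
    then show "dist (dist a y - dist z y) (dist b y - dist z y) \<le> 1 * dist a b"
      by (simp add: dist_real_def dist_commute)
  qed simp
  then show "(\<lambda>x. dist x y - dist z y) \<in> Lip0 z" "Lip (\<lambda>x. dist x y - dist z y) \<le> 1"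
    unfolding Lip0_def by (auto intro: Lip_le)
qed

lemma
  assumes "\<phi> \<in> Lip0 z"
  shows Lip0_abs_diff_le: "\<bar>\<phi> x - \<phi> y\<bar> \<le> Lip \<phi> * dist x y"
    and Lip0_Lip_nonneg: "0 \<le> Lip \<phi>"
proof -
  obtain L where L: "L-lipschitz_on UNIV \<phi>" using assms unfolding Lip0_def by auto
  from lipschitz_on_Lip[OF L] Lip_nonneg[OF L]
  show "\<bar>\<phi> x - \<phi> y\<bar> \<le> Lip \<phi> * dist x y" "0 \<le> Lip \<phi>"
    by (auto dest: lipschitz_onD simp: dist_real_def)
qed

lemma Lip0_abs_diff_le_dist:
  assumes "\<phi> \<in> Lip0 z" "Lip \<phi> \<le> 1"
  shows "\<bar>\<phi> x - \<phi> y\<bar> \<le> dist x y"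
proof -
  have "\<bar>\<phi> x - \<phi> y\<bar> \<le> Lip \<phi> * dist x y" by (rule Lip0_abs_diff_le[OF assms(1)])
  also have "\<dots> \<le> 1 * dist x y" using assms(2) by (intro mult_right_mono) auto
  finally show ?thesis by simp
qed

lemma Lip_comp_le_Lip:
  assumes "g \<in> Lip0_maps z" "\<phi> \<in> Lip0 z" "Lip \<phi> \<le> 1"
  shows "Lip (\<phi> \<circ> g) \<le> Lip g"
proof -
  have "Lip (\<phi> \<circ> g) \<le> Lip \<phi> * Lip g" by (rule Lip_comp_le[OF assms(2,1)])
  also have "\<dots> \<le> 1 * Lip g" using assms(3) Lip0_maps_Lip_nonneg[OF assms(1)] by (intro mult_right_mono)
  finally show ?thesis by simp
qed

section \<open>The dual of \<open>Lip0\<close> and the free space\<close>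

lemma
  assumes "\<And>\<phi>. \<phi> \<in> Lip0 z \<Longrightarrow> Lip \<phi> \<le> 1 \<Longrightarrow> \<bar>\<Lambda> \<phi>\<bar> \<le> B"
  shows dual_norm_le: "dual_norm z \<Lambda> \<le> B"
    and dual_norm_nonneg: "0 \<le> dual_norm z \<Lambda>"
    and dual_norm_ge: "\<And>\<phi>. \<phi> \<in> Lip0 z \<Longrightarrow> Lip \<phi> \<le> 1 \<Longrightarrow> \<bar>\<Lambda> \<phi>\<bar> \<le> dual_norm z \<Lambda>"
proof -
  let ?S = "{\<bar>\<Lambda> \<phi>\<bar> | \<phi>. \<phi> \<in> Lip0 z \<and> Lip \<phi> \<le> 1}"
  have "\<bar>\<Lambda> (\<lambda>x. 0)\<bar> \<in> ?S" using Lip0_zero[of z] Lip_zero[where 'a='a] by force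
  then have "?S \<noteq> {}" by blast
  then show "dual_norm z \<Lambda> \<le> B" unfolding dual_norm_def using assms by (intro cSup_least) auto
  have "bdd_above ?S" using assms by (auto intro!: bdd_aboveI[of _ B])
  then show ge: "\<And>\<phi>. \<phi> \<in> Lip0 z \<Longrightarrow> Lip \<phi> \<le> 1 \<Longrightarrow> \<bar>\<Lambda> \<phi>\<bar> \<le> dual_norm z \<Lambda>"
    unfolding dual_norm_def by (intro cSup_upper) auto
  show "0 \<le> dual_norm z \<Lambda>" using ge[OF Lip0_zero] Lip_zero[where 'a='a] by fastforce
qed

lemma Lip0_dualI:
  assumes "\<And>\<phi>. \<phi> \<notin> Lip0 z \<Longrightarrow> \<Lambda> \<phi> = 0"
    and "\<And>\<phi> \<psi> a b. \<phi> \<in> Lip0 z \<Longrightarrow> \<psi> \<in> Lip0 z \<Longrightarrow>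
           \<Lambda> (\<lambda>x. a * \<phi> x + b * \<psi> x) = a * \<Lambda> \<phi> + b * \<Lambda> \<psi>"
    and "\<And>\<phi>. \<phi> \<in> Lip0 z \<Longrightarrow> \<bar>\<Lambda> \<phi>\<bar> \<le> B * Lip \<phi>"
  shows "\<Lambda> \<in> Lip0_dual z"
  unfolding Lip0_dual_def using assms by blast

lemma Lip0_dual_lincomb_arg:
  assumes "\<Lambda> \<in> Lip0_dual z" "\<phi> \<in> Lip0 z" "\<psi> \<in> Lip0 z"
  shows "\<Lambda> (\<lambda>x. a * \<phi> x + b * \<psi> x) = a * \<Lambda> \<phi> + b * \<Lambda> \<psi>"
  using assms unfolding Lip0_dual_def by blast

lemma Lip0_dual_outside:
  assumes "\<Lambda> \<in> Lip0_dual z" "\<phi> \<notin> Lip0 z"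
  shows "\<Lambda> \<phi> = 0"
  using assms unfolding Lip0_dual_def by blast

lemma Lip0_dual_zero_arg:
  assumes "\<Lambda> \<in> Lip0_dual z"
  shows "\<Lambda> (\<lambda>x. 0) = 0"
  using Lip0_dual_lincomb_arg[OF assms Lip0_zero Lip0_zero, of 0 0] by simp

lemma Lip0_dual_bounded_on_unit_ball:
  assumes "\<Lambda> \<in> Lip0_dual z"
  obtains B where "\<And>\<psi>. \<psi> \<in> Lip0 z \<Longrightarrow> Lip \<psi> \<le> 1 \<Longrightarrow> \<bar>\<Lambda> \<psi>\<bar> \<le> B"
proof -
  obtain B where B: "\<And>\<psi>. \<psi> \<in> Lip0 z \<Longrightarrow> \<bar>\<Lambda> \<psi>\<bar> \<le> B * Lip \<psi>"
    using assms unfolding Lip0_dual_def by blast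
  have "\<bar>\<Lambda> \<psi>\<bar> \<le> \<bar>B\<bar>" if "\<psi> \<in> Lip0 z" "Lip \<psi> \<le> 1" for \<psi>
  proof -
    have "B * Lip \<psi> \<le> \<bar>B\<bar> * 1"
      using that Lip0_Lip_nonneg[OF that(1)] by (intro mult_mono) auto
    then show ?thesis using B[OF that(1)] by linarith
  qed
  then show ?thesis by (rule that)
qed

lemma Lip0_dual_norm_nonneg: "\<Lambda> \<in> Lip0_dual z \<Longrightarrow> 0 \<le> dual_norm z \<Lambda>"
  by (metis Lip0_dual_bounded_on_unit_ball dual_norm_nonneg)

lemma Lip0_dual_abs_le:
  assumes "\<Lambda> \<in> Lip0_dual z" "\<phi> \<in> Lip0 z"
  shows "\<bar>\<Lambda> \<phi>\<bar> \<le> dual_norm z \<Lambda> * Lip \<phi>"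
proof -
  obtain B where unit: "\<And>\<psi>. \<psi> \<in> Lip0 z \<Longrightarrow> Lip \<psi> \<le> 1 \<Longrightarrow> \<bar>\<Lambda> \<psi>\<bar> \<le> B"
    using Lip0_dual_bounded_on_unit_ball[OF assms(1)] by blast
  show ?thesis
  proof (cases "Lip \<phi> = 0")
    case True
    have "\<phi> x = 0" for x
      using Lip0_abs_diff_le[OF assms(2), of x z] True assms(2) unfolding Lip0_def by simp
    then have "\<phi> = (\<lambda>x. 0)" by auto
    then show ?thesis using Lip0_dual_zero_arg[OF assms(1)] True by simp
  next
    case False
    define c where "c = Lip \<phi>"
    have c: "c > 0" using False Lip0_Lip_nonneg[OF assms(2)] unfolding c_def by simp
    obtain L where L: "L-lipschitz_on UNIV \<phi>" using assms(2) unfolding Lip0_def by auto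
    have "(\<bar>1/c\<bar> * c)-lipschitz_on UNIV (\<lambda>x. (1/c) * \<phi> x)"
      by (rule lipschitz_on_cmult_real) (use lipschitz_on_Lip[OF L] c_def in simp)
    then have "Lip (\<lambda>x. (1/c) * \<phi> x) \<le> 1" using Lip_le c by fastforce
    moreover have "(\<lambda>x. (1/c) * \<phi> x) \<in> Lip0 z"
      using Lip0_lincomb[OF assms(2) assms(2), of "1/c" 0] by simp
    ultimately have "\<bar>\<Lambda> (\<lambda>x. (1/c) * \<phi> x + 0 * \<phi> x)\<bar> \<le> dual_norm z \<Lambda>"
      using dual_norm_ge[OF unit] by simp
    then have "\<bar>\<Lambda> \<phi>\<bar> / c \<le> dual_norm z \<Lambda>"
      using Lip0_dual_lincomb_arg[OF assms(1,2,2), of "1/c" 0] c by (simp add: abs_mult)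
    then show ?thesis using c unfolding c_def by (simp add: divide_le_eq mult.commute)
  qed
qed

lemma Lip0_dual_abs_le_norm:
  assumes "\<Lambda> \<in> Lip0_dual z" "\<phi> \<in> Lip0 z" "Lip \<phi> \<le> 1"
  shows "\<bar>\<Lambda> \<phi>\<bar> \<le> dual_norm z \<Lambda>"
proof -
  have "\<bar>\<Lambda> \<phi>\<bar> \<le> dual_norm z \<Lambda> * Lip \<phi>" by (rule Lip0_dual_abs_le[OF assms(1,2)])
  also have "\<dots> \<le> dual_norm z \<Lambda> * 1"
    using Lip0_dual_norm_nonneg[OF assms(1)] assms(3) by (intro mult_left_mono)
  finally show ?thesis by simp
qed

lemma Lip0_dual_lincomb:
  assumes "\<Lambda> \<in> Lip0_dual z" "\<Gamma> \<in> Lip0_dual z"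
  shows "(\<lambda>\<phi>. a * \<Lambda> \<phi> + b * \<Gamma> \<phi>) \<in> Lip0_dual z"
proof (rule Lip0_dualI)
  show "a * \<Lambda> \<phi> + b * \<Gamma> \<phi> = 0" if "\<phi> \<notin> Lip0 z" for \<phi>
    using Lip0_dual_outside[OF assms(1) that] Lip0_dual_outside[OF assms(2) that] by simp
  show "a * \<Lambda> (\<lambda>x. c * \<phi> x + d * \<psi> x) + b * \<Gamma> (\<lambda>x. c * \<phi> x + d * \<psi> x)
      = c * (a * \<Lambda> \<phi> + b * \<Gamma> \<phi>) + d * (a * \<Lambda> \<psi> + b * \<Gamma> \<psi>)"
    if "\<phi> \<in> Lip0 z" "\<psi> \<in> Lip0 z" for \<phi> \<psi> c d
    using Lip0_dual_lincomb_arg[OF assms(1) that] Lip0_dual_lincomb_arg[OF assms(2) that]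
    by (simp add: algebra_simps)
  show "\<bar>a * \<Lambda> \<phi> + b * \<Gamma> \<phi>\<bar> \<le> (\<bar>a\<bar> * dual_norm z \<Lambda> + \<bar>b\<bar> * dual_norm z \<Gamma>) * Lip \<phi>"
    if "\<phi> \<in> Lip0 z" for \<phi>
  proof -
    have "\<bar>a * \<Lambda> \<phi> + b * \<Gamma> \<phi>\<bar> \<le> \<bar>a\<bar> * \<bar>\<Lambda> \<phi>\<bar> + \<bar>b\<bar> * \<bar>\<Gamma> \<phi>\<bar>"
      by (metis abs_mult abs_triangle_ineq)
    also have "\<dots> \<le> \<bar>a\<bar> * (dual_norm z \<Lambda> * Lip \<phi>) + \<bar>b\<bar> * (dual_norm z \<Gamma> * Lip \<phi>)"
      using Lip0_dual_abs_le[OF assms(1) that] Lip0_dual_abs_le[OF assms(2) that]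
      by (intro add_mono mult_left_mono) auto
    finally show ?thesis by (simp add: algebra_simps)
  qed
qed

lemma Lip0_dual_diff:
  assumes "\<Lambda> \<in> Lip0_dual z" "\<Gamma> \<in> Lip0_dual z"
  shows "(\<lambda>\<phi>. \<Lambda> \<phi> - \<Gamma> \<phi>) \<in> Lip0_dual z"
  using Lip0_dual_lincomb[OF assms, of 1 "-1"] by simp

lemma free_dist_le:
  assumes "\<And>\<phi>. \<phi> \<in> Lip0 z \<Longrightarrow> Lip \<phi> \<le> 1 \<Longrightarrow> \<bar>\<Lambda> \<phi> - \<Gamma> \<phi>\<bar> \<le> B"
  shows "free_dist z \<Lambda> \<Gamma> \<le> B"
  unfolding free_dist_def using dual_norm_le[of z "\<lambda>\<phi>. \<Lambda> \<phi> - \<Gamma> \<phi>" B] assms by simp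

lemma
  assumes "\<Lambda> \<in> Lip0_dual z" "\<Gamma> \<in> Lip0_dual z"
  shows free_dist_abs_le: "\<phi> \<in> Lip0 z \<Longrightarrow> \<bar>\<Lambda> \<phi> - \<Gamma> \<phi>\<bar> \<le> free_dist z \<Lambda> \<Gamma> * Lip \<phi>"
    and free_dist_abs_le_dist: "\<phi> \<in> Lip0 z \<Longrightarrow> Lip \<phi> \<le> 1 \<Longrightarrow> \<bar>\<Lambda> \<phi> - \<Gamma> \<phi>\<bar> \<le> free_dist z \<Lambda> \<Gamma>"
    and free_dist_nonneg: "0 \<le> free_dist z \<Lambda> \<Gamma>"
  using Lip0_dual_abs_le Lip0_dual_abs_le_norm Lip0_dual_norm_nonneg Lip0_dual_diff[OF assms]
  unfolding free_dist_def by auto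

lemma free_dist_commute: "free_dist z \<Lambda> \<Gamma> = free_dist z \<Gamma> \<Lambda>"
  unfolding free_dist_def dual_norm_def by (simp add: abs_minus_commute)

lemma free_dist_triangle:
  assumes "\<Lambda> \<in> Lip0_dual z" "\<Gamma> \<in> Lip0_dual z" "\<Theta> \<in> Lip0_dual z"
  shows "free_dist z \<Lambda> \<Theta> \<le> free_dist z \<Lambda> \<Gamma> + free_dist z \<Gamma> \<Theta>"
proof (rule free_dist_le)
  fix \<phi> assume "\<phi> \<in> Lip0 z" "Lip \<phi> \<le> 1"
  then have "\<bar>\<Lambda> \<phi> - \<Gamma> \<phi>\<bar> \<le> free_dist z \<Lambda> \<Gamma>" "\<bar>\<Gamma> \<phi> - \<Theta> \<phi>\<bar> \<le> free_dist z \<Gamma> \<Theta>"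
    using free_dist_abs_le_dist assms by blast+
  then show "\<bar>\<Lambda> \<phi> - \<Theta> \<phi>\<bar> \<le> free_dist z \<Lambda> \<Gamma> + free_dist z \<Gamma> \<Theta>" by linarith
qed

lemma free_dist_le_0_imp_eq:
  assumes "\<Lambda> \<in> Lip0_dual z" "\<Gamma> \<in> Lip0_dual z" "free_dist z \<Lambda> \<Gamma> \<le> 0"
  shows "\<Lambda> = \<Gamma>"
proof
  fix \<phi>
  show "\<Lambda> \<phi> = \<Gamma> \<phi>"
  proof (cases "\<phi> \<in> Lip0 z")
    case True
    have "\<bar>\<Lambda> \<phi> - \<Gamma> \<phi>\<bar> \<le> free_dist z \<Lambda> \<Gamma> * Lip \<phi>" by (rule free_dist_abs_le[OF assms(1,2) True])
    also have "\<dots> \<le> 0" using assms(3) Lip0_Lip_nonneg[OF True] by (simp add: mult_nonpos_nonneg)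
    finally show ?thesis by simp
  qed (simp add: Lip0_dual_outside[OF assms(1)] Lip0_dual_outside[OF assms(2)])
qed

lemma free_dist_self: "free_dist z \<Lambda> \<Lambda> = 0"
  using free_dist_le[of z \<Lambda> \<Lambda> 0] dual_norm_nonneg[of z "\<lambda>\<phi>. \<Lambda> \<phi> - \<Lambda> \<phi>" 0]
  unfolding free_dist_def by fastforce
lemma delta_Lip0_dual: "delta z x \<in> Lip0_dual z"
proof (rule Lip0_dualI)
  show "delta z x \<phi> = 0" if "\<phi> \<notin> Lip0 z" for \<phi> using that by (simp add: delta_def)
  show "delta z x (\<lambda>t. a * \<phi> t + b * \<psi> t) = a * delta z x \<phi> + b * delta z x \<psi>"
    if "\<phi> \<in> Lip0 z" "\<psi> \<in> Lip0 z" for \<phi> \<psi> a b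
    using that Lip0_lincomb[OF that] by (simp add: delta_def)
  show "\<bar>delta z x \<phi>\<bar> \<le> dist x z * Lip \<phi>" if "\<phi> \<in> Lip0 z" for \<phi>
    using that Lip0_abs_diff_le[OF that, of x z] unfolding delta_def Lip0_def by (simp add: mult.commute)
qed

lemma delta_span_Lip0_dual:
  assumes "\<mu> \<in> delta_span z"
  shows "\<mu> \<in> Lip0_dual z"
proof -
  obtain S a where S: "finite S" and \<mu>: "\<mu> = (\<lambda>\<phi>. \<Sum>x\<in>S. a x * delta z x \<phi>)"
    using assms unfolding delta_span_def by blast
  have "(\<lambda>\<phi>. \<Sum>x\<in>S'. a x * delta z x \<phi>) \<in> Lip0_dual z" if "finite S'" for S'
    using that
  proof (induction S' rule: finite_induct)
    case empty
    show ?case by (rule Lip0_dualI[where B=0]) (simp_all add: Lip0_Lip_nonneg)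
  next
    case (insert y F)
    then show ?case
      using Lip0_dual_lincomb[OF delta_Lip0_dual[of z y] insert.IH, of "a y" 1] by simp
  qed
  then show ?thesis using S \<mu> by blast
qed

lemma delta_in_delta_span: "delta z x \<in> delta_span z"
  unfolding delta_span_def by (auto intro!: exI[of _ "{x}"] exI[of _ "\<lambda>_. 1"])

lemma delta_span_image:
  assumes "finite S"
  shows "(\<lambda>\<phi>. \<Sum>x\<in>S. a x * delta z (h x) \<phi>) \<in> delta_span z"
proof -
  define b where "b y = (\<Sum>x\<in>{x\<in>S. h x = y}. a x)" for y
  have "(\<Sum>x\<in>S. a x * delta z (h x) \<phi>) = (\<Sum>y\<in>h ` S. b y * delta z y \<phi>)" for \<phi>
  proof -
    have "(\<Sum>x\<in>S. a x * delta z (h x) \<phi>) = (\<Sum>y\<in>h ` S. \<Sum>x\<in>{x\<in>S. h x = y}. a x * delta z (h x) \<phi>)"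
      by (rule sum.image_gen[OF assms])
    also have "\<dots> = (\<Sum>y\<in>h ` S. b y * delta z y \<phi>)"
      unfolding b_def sum_distrib_right by (intro sum.cong refl) auto
    finally show ?thesis .
  qed
  then show ?thesis unfolding delta_span_def using assms by (intro CollectI exI[of _ "h ` S"] exI[of _ b]) auto
qed

lemma delta_span_lincomb:
  assumes "\<mu> \<in> delta_span z" "\<nu> \<in> delta_span z"
  shows "(\<lambda>\<phi>. a * \<mu> \<phi> + b * \<nu> \<phi>) \<in> delta_span z"
proof -
  obtain S c where S: "finite S" "\<mu> = (\<lambda>\<phi>. \<Sum>x\<in>S. c x * delta z x \<phi>)"
    using assms(1) unfolding delta_span_def by blast
  obtain T d where T: "finite T" "\<nu> = (\<lambda>\<phi>. \<Sum>x\<in>T. d x * delta z x \<phi>)"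
    using assms(2) unfolding delta_span_def by blast
  let ?c = "\<lambda>x. if x \<in> S then c x else 0" and ?d = "\<lambda>x. if x \<in> T then d x else 0"
  have "(\<Sum>x\<in>S \<union> T. ?c x * delta z x \<phi>) = \<mu> \<phi>" for \<phi>
    unfolding S(2) using S(1) T(1) by (intro sum.mono_neutral_cong_right) auto
  moreover have "(\<Sum>x\<in>S \<union> T. ?d x * delta z x \<phi>) = \<nu> \<phi>" for \<phi>
    unfolding T(2) using S(1) T(1) by (intro sum.mono_neutral_cong_right) auto
  moreover have "(\<Sum>x\<in>S \<union> T. (a * ?c x + b * ?d x) * delta z x \<phi>)
      = a * (\<Sum>x\<in>S \<union> T. ?c x * delta z x \<phi>) + b * (\<Sum>x\<in>S \<union> T. ?d x * delta z x \<phi>)" for \<phi>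
    by (simp add: distrib_right sum.distrib sum_distrib_left mult.assoc)
  ultimately have "a * \<mu> \<phi> + b * \<nu> \<phi> = (\<Sum>x\<in>S \<union> T. (a * ?c x + b * ?d x) * delta z x \<phi>)" for \<phi>
    by simp
  then show ?thesis unfolding delta_span_def using S(1) T(1)
    by (intro CollectI exI[of _ "S \<union> T"] exI[of _ "\<lambda>x. a * ?c x + b * ?d x"]) auto
qed

lemma free_space_iff:
  "\<Lambda> \<in> free_space z \<longleftrightarrow> \<Lambda> \<in> Lip0_dual z \<and> (\<forall>\<epsilon>>0. \<exists>\<mu>\<in>delta_span z. free_dist z \<Lambda> \<mu> < \<epsilon>)"
  unfolding free_space_def free_dist_def by simp

lemma free_space_Lip0_dual: "\<Lambda> \<in> free_space z \<Longrightarrow> \<Lambda> \<in> Lip0_dual z"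
  unfolding free_space_iff by simp

lemma delta_span_free_space: "\<mu> \<in> delta_span z \<Longrightarrow> \<mu> \<in> free_space z"
  unfolding free_space_iff using delta_span_Lip0_dual free_dist_self by (metis less_numeral_extra(3))

lemma delta_free_space: "delta z x \<in> free_space z"
  by (rule delta_span_free_space[OF delta_in_delta_span])

lemma free_space_lincomb:
  assumes "\<Lambda> \<in> free_space z" "\<Gamma> \<in> free_space z"
  shows "(\<lambda>\<phi>. a * \<Lambda> \<phi> + b * \<Gamma> \<phi>) \<in> free_space z"
  unfolding free_space_iff
proof (intro conjI allI impI)
  have L: "\<Lambda> \<in> Lip0_dual z" and G: "\<Gamma> \<in> Lip0_dual z" using assms free_space_Lip0_dual by auto
  show "(\<lambda>\<phi>. a * \<Lambda> \<phi> + b * \<Gamma> \<phi>) \<in> Lip0_dual z" by (rule Lip0_dual_lincomb[OF L G])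
  fix \<epsilon> :: real assume "\<epsilon> > 0"
  define \<delta> where "\<delta> = \<epsilon> / (\<bar>a\<bar> + \<bar>b\<bar> + 1)"
  have "\<delta> > 0" using \<open>\<epsilon> > 0\<close> unfolding \<delta>_def by (simp add: add_pos_nonneg)
  then obtain \<mu> \<nu> where \<mu>: "\<mu> \<in> delta_span z" "free_dist z \<Lambda> \<mu> < \<delta>"
    and \<nu>: "\<nu> \<in> delta_span z" "free_dist z \<Gamma> \<nu> < \<delta>"
    using assms unfolding free_space_iff by meson
  have M: "\<mu> \<in> Lip0_dual z" "\<nu> \<in> Lip0_dual z" using \<mu> \<nu> delta_span_Lip0_dual by auto
  have "free_dist z (\<lambda>\<phi>. a * \<Lambda> \<phi> + b * \<Gamma> \<phi>) (\<lambda>\<phi>. a * \<mu> \<phi> + b * \<nu> \<phi>) \<le> \<bar>a\<bar> * \<delta> + \<bar>b\<bar> * \<delta>"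
  proof (rule free_dist_le)
    fix \<phi> assume \<phi>: "\<phi> \<in> Lip0 z" "Lip \<phi> \<le> 1"
    have close: "\<bar>\<Lambda> \<phi> - \<mu> \<phi>\<bar> \<le> \<delta>" "\<bar>\<Gamma> \<phi> - \<nu> \<phi>\<bar> \<le> \<delta>"
      using free_dist_abs_le_dist[OF L M(1) \<phi>] free_dist_abs_le_dist[OF G M(2) \<phi>] \<mu>(2) \<nu>(2) by linarith+
    have "\<bar>a * (\<Lambda> \<phi> - \<mu> \<phi>) + b * (\<Gamma> \<phi> - \<nu> \<phi>)\<bar> \<le> \<bar>a\<bar> * \<bar>\<Lambda> \<phi> - \<mu> \<phi>\<bar> + \<bar>b\<bar> * \<bar>\<Gamma> \<phi> - \<nu> \<phi>\<bar>"
      by (metis abs_mult abs_triangle_ineq)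
    also have "\<dots> \<le> \<bar>a\<bar> * \<delta> + \<bar>b\<bar> * \<delta>"
      using close by (intro add_mono mult_left_mono) auto
    finally show "\<bar>a * \<Lambda> \<phi> + b * \<Gamma> \<phi> - (a * \<mu> \<phi> + b * \<nu> \<phi>)\<bar> \<le> \<bar>a\<bar> * \<delta> + \<bar>b\<bar> * \<delta>"
      by (simp add: algebra_simps)
  qed
  also have "\<dots> < (\<bar>a\<bar> + \<bar>b\<bar> + 1) * \<delta>" using \<open>\<delta> > 0\<close> by (simp add: algebra_simps)
  also have "\<dots> = \<epsilon>" unfolding \<delta>_def by (simp add: add_pos_nonneg)
  finally show "\<exists>\<mu>\<in>delta_span z. free_dist z (\<lambda>\<phi>. a * \<Lambda> \<phi> + b * \<Gamma> \<phi>) \<mu> < \<epsilon>"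
    using delta_span_lincomb[OF \<mu>(1) \<nu>(1)] by blast
qed

lemma free_dist_delta: "free_dist z (delta z x) (delta z y) = dist x y"
proof (rule antisym)
  show "free_dist z (delta z x) (delta z y) \<le> dist x y"
    by (rule free_dist_le) (simp add: delta_def Lip0_abs_diff_le_dist)
  have "\<bar>delta z x (\<lambda>t. dist t y - dist z y) - delta z y (\<lambda>t. dist t y - dist z y)\<bar>
      \<le> free_dist z (delta z x) (delta z y)"
    by (rule free_dist_abs_le_dist[OF delta_Lip0_dual delta_Lip0_dual Lip0_dist Lip_dist_le])
  then show "dist x y \<le> free_dist z (delta z x) (delta z y)"
    using Lip0_dist[of y z] by (simp add: delta_def)
qed

section \<open>Pushforwards and the linearization\<close>

definition pushforward :: "'a::metric_space \<Rightarrow> ('a \<Rightarrow> 'a) \<Rightarrow> (('a \<Rightarrow> real) \<Rightarrow> real) \<Rightarrow> (('a \<Rightarrow> real) \<Rightarrow> real)"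
  where "pushforward z g \<Lambda> = (\<lambda>\<phi>. if \<phi> \<in> Lip0 z then \<Lambda> (\<phi> \<circ> g) else 0)"

lemma pushforward_Lip0_dual:
  assumes "g \<in> Lip0_maps z" "\<Lambda> \<in> Lip0_dual z"
  shows "pushforward z g \<Lambda> \<in> Lip0_dual z"
proof (rule Lip0_dualI[where B = "dual_norm z \<Lambda> * Lip g"])
  show "pushforward z g \<Lambda> \<phi> = 0" if "\<phi> \<notin> Lip0 z" for \<phi>
    using that by (simp add: pushforward_def)
  show "pushforward z g \<Lambda> (\<lambda>x. a * \<phi> x + b * \<psi> x) = a * pushforward z g \<Lambda> \<phi> + b * pushforward z g \<Lambda> \<psi>"
    if "\<phi> \<in> Lip0 z" "\<psi> \<in> Lip0 z" for \<phi> \<psi> a b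
    using that Lip0_lincomb[OF that]
      Lip0_dual_lincomb_arg[OF assms(2) Lip0_comp[OF that(1) assms(1)] Lip0_comp[OF that(2) assms(1)]]
    by (simp add: pushforward_def comp_def)
  show "\<bar>pushforward z g \<Lambda> \<phi>\<bar> \<le> dual_norm z \<Lambda> * Lip g * Lip \<phi>" if "\<phi> \<in> Lip0 z" for \<phi>
  proof -
    have "\<bar>\<Lambda> (\<phi> \<circ> g)\<bar> \<le> dual_norm z \<Lambda> * Lip (\<phi> \<circ> g)"
      by (rule Lip0_dual_abs_le[OF assms(2) Lip0_comp[OF that assms(1)]])
    also have "\<dots> \<le> dual_norm z \<Lambda> * (Lip \<phi> * Lip g)"
      using Lip_comp_le[OF that assms(1)] Lip0_dual_norm_nonneg[OF assms(2)] by (rule mult_left_mono)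
    finally show ?thesis using that by (simp add: pushforward_def algebra_simps)
  qed
qed

lemma free_dist_pushforward_le:
  assumes "g \<in> Lip0_maps z" "\<Lambda> \<in> Lip0_dual z" "\<Gamma> \<in> Lip0_dual z"
  shows "free_dist z (pushforward z g \<Lambda>) (pushforward z g \<Gamma>) \<le> Lip g * free_dist z \<Lambda> \<Gamma>"
proof (rule free_dist_le)
  fix \<phi> assume \<phi>: "\<phi> \<in> Lip0 z" "Lip \<phi> \<le> 1"
  have c: "\<phi> \<circ> g \<in> Lip0 z" by (rule Lip0_comp[OF \<phi>(1) assms(1)])
  have "\<bar>\<Lambda> (\<phi> \<circ> g) - \<Gamma> (\<phi> \<circ> g)\<bar> \<le> free_dist z \<Lambda> \<Gamma> * Lip (\<phi> \<circ> g)"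
    by (rule free_dist_abs_le[OF assms(2,3) c])
  also have "\<dots> \<le> free_dist z \<Lambda> \<Gamma> * Lip g"
    using Lip_comp_le_Lip[OF assms(1) \<phi>] free_dist_nonneg[OF assms(2,3)] by (rule mult_left_mono)
  finally show "\<bar>pushforward z g \<Lambda> \<phi> - pushforward z g \<Gamma> \<phi>\<bar> \<le> Lip g * free_dist z \<Lambda> \<Gamma>"
    using \<phi> by (simp add: pushforward_def mult.commute)
qed

lemma pushforward_delta_sum:
  assumes "g \<in> Lip0_maps z"
  shows "pushforward z g (\<lambda>\<phi>. \<Sum>x\<in>S. a x * delta z x \<phi>) = (\<lambda>\<phi>. \<Sum>x\<in>S. a x * delta z (g x) \<phi>)"
  using Lip0_comp[OF _ assms] by (auto simp: pushforward_def delta_def)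

lemma pushforward_delta:
  assumes "g \<in> Lip0_maps z"
  shows "pushforward z g (delta z x) = delta z (g x)"
  using pushforward_delta_sum[OF assms, of "\<lambda>_. 1" "{x}"] by simp

lemma pushforward_free_space:
  assumes "g \<in> Lip0_maps z" "\<Lambda> \<in> free_space z"
  shows "pushforward z g \<Lambda> \<in> free_space z"
  unfolding free_space_iff
proof (intro conjI allI impI)
  have L: "\<Lambda> \<in> Lip0_dual z" by (rule free_space_Lip0_dual[OF assms(2)])
  then show "pushforward z g \<Lambda> \<in> Lip0_dual z" by (rule pushforward_Lip0_dual[OF assms(1)])
  fix \<epsilon> :: real assume "\<epsilon> > 0"
  have lg: "0 \<le> Lip g" by (rule Lip0_maps_Lip_nonneg[OF assms(1)])
  define \<delta> where "\<delta> = \<epsilon> / (Lip g + 1)"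
  have "\<delta> > 0" using \<open>\<epsilon> > 0\<close> lg unfolding \<delta>_def by simp
  then obtain \<mu> where \<mu>: "\<mu> \<in> delta_span z" "free_dist z \<Lambda> \<mu> < \<delta>"
    using assms(2) unfolding free_space_iff by blast
  then obtain S a where S: "finite S" "\<mu> = (\<lambda>\<phi>. \<Sum>x\<in>S. a x * delta z x \<phi>)"
    unfolding delta_span_def by blast
  have "pushforward z g \<mu> \<in> delta_span z"
    unfolding S(2) pushforward_delta_sum[OF assms(1)] by (rule delta_span_image[OF S(1)])
  moreover have "free_dist z (pushforward z g \<Lambda>) (pushforward z g \<mu>) < \<epsilon>"
  proof -
    have "free_dist z (pushforward z g \<Lambda>) (pushforward z g \<mu>) \<le> Lip g * free_dist z \<Lambda> \<mu>"
      by (rule free_dist_pushforward_le[OF assms(1) L delta_span_Lip0_dual[OF \<mu>(1)]])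
    also have "\<dots> \<le> Lip g * \<delta>" using \<mu>(2) lg by (intro mult_left_mono) auto
    also have "\<dots> < \<epsilon>" using \<open>\<epsilon> > 0\<close> lg unfolding \<delta>_def by (simp add: field_simps)
    finally show ?thesis .
  qed
  ultimately show "\<exists>\<mu>\<in>delta_span z. free_dist z (pushforward z g \<Lambda>) \<mu> < \<epsilon>" by blast
qed

lemma pushforward_id:
  assumes "\<Lambda> \<in> Lip0_dual z"
  shows "pushforward z id \<Lambda> = \<Lambda>"
  using Lip0_dual_outside[OF assms] by (auto simp: pushforward_def fun_eq_iff)

lemma pushforward_pushforward:
  assumes "g \<in> Lip0_maps z"
  shows "pushforward z g (pushforward z h \<Lambda>) = pushforward z (g \<circ> h) \<Lambda>"
  using Lip0_comp[OF _ assms] by (auto simp: pushforward_def fun_eq_iff o_assoc)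

definition is_linearization :: "'a::metric_space \<Rightarrow> ('a \<Rightarrow> 'a) \<Rightarrow> ((('a \<Rightarrow> real) \<Rightarrow> real) \<Rightarrow> (('a \<Rightarrow> real) \<Rightarrow> real)) \<Rightarrow> bool"
  where "is_linearization z g T \<longleftrightarrow>
      (\<forall>\<Lambda>\<in>free_space z. T \<Lambda> \<in> free_space z)
    \<and> (\<forall>\<Lambda>\<in>free_space z. \<forall>\<Gamma>\<in>free_space z. \<forall>a b.
          T (\<lambda>\<phi>. a * \<Lambda> \<phi> + b * \<Gamma> \<phi>) = (\<lambda>\<phi>. a * T \<Lambda> \<phi> + b * T \<Gamma> \<phi>))
    \<and> (\<exists>B. \<forall>\<Lambda>\<in>free_space z. dual_norm z (T \<Lambda>) \<le> B * dual_norm z \<Lambda>)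
    \<and> (\<forall>x. T (delta z x) = delta z (g x))
    \<and> (\<forall>\<Lambda>. \<Lambda> \<notin> free_space z \<longrightarrow> T \<Lambda> = (\<lambda>\<phi>. 0))"

lemma hat_def': "hat z g = (THE T. is_linearization z g T)"
  unfolding hat_def is_linearization_def ..

lemma
  assumes "is_linearization z g T"
  shows linearization_free_space: "\<Lambda> \<in> free_space z \<Longrightarrow> T \<Lambda> \<in> free_space z"
    and linearization_lincomb: "\<Lambda> \<in> free_space z \<Longrightarrow> \<Gamma> \<in> free_space z \<Longrightarrow>
          T (\<lambda>\<phi>. a * \<Lambda> \<phi> + b * \<Gamma> \<phi>) = (\<lambda>\<phi>. a * T \<Lambda> \<phi> + b * T \<Gamma> \<phi>)"
    and linearization_delta: "T (delta z x) = delta z (g x)"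
    and linearization_outside: "\<Lambda> \<notin> free_space z \<Longrightarrow> T \<Lambda> = (\<lambda>\<phi>. 0)"
  using assms unfolding is_linearization_def by blast+

lemma linearization_lipschitz:
  assumes "is_linearization z g T"
  obtains B where "B \<ge> 0"
    "\<And>\<Lambda> \<Gamma>. \<Lambda> \<in> free_space z \<Longrightarrow> \<Gamma> \<in> free_space z \<Longrightarrow> free_dist z (T \<Lambda>) (T \<Gamma>) \<le> B * free_dist z \<Lambda> \<Gamma>"
proof -
  obtain B where B: "\<And>\<Lambda>. \<Lambda> \<in> free_space z \<Longrightarrow> dual_norm z (T \<Lambda>) \<le> B * dual_norm z \<Lambda>"
    using assms unfolding is_linearization_def by blast
  have "free_dist z (T \<Lambda>) (T \<Gamma>) \<le> \<bar>B\<bar> * free_dist z \<Lambda> \<Gamma>"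
    if "\<Lambda> \<in> free_space z" "\<Gamma> \<in> free_space z" for \<Lambda> \<Gamma>
  proof -
    have "free_dist z (T \<Lambda>) (T \<Gamma>) = dual_norm z (T (\<lambda>\<phi>. 1 * \<Lambda> \<phi> + (-1) * \<Gamma> \<phi>))"
      unfolding linearization_lincomb[OF assms that] by (simp add: free_dist_def)
    also have "\<dots> \<le> B * free_dist z \<Lambda> \<Gamma>"
      using B[OF free_space_lincomb[OF that, of 1 "-1"]] by (simp add: free_dist_def)
    also have "\<dots> \<le> \<bar>B\<bar> * free_dist z \<Lambda> \<Gamma>"
      using free_dist_nonneg[OF that[THEN free_space_Lip0_dual]] by (intro mult_right_mono) auto
    finally show ?thesis .
  qed
  then show ?thesis by (intro that[of "\<bar>B\<bar>"]) auto
qed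

lemma linearization_delta_sum:
  assumes "is_linearization z g T" "finite S"
  shows "T (\<lambda>\<phi>. \<Sum>x\<in>S. a x * delta z x \<phi>) = (\<lambda>\<phi>. \<Sum>x\<in>S. a x * delta z (g x) \<phi>)"
  using assms(2)
proof (induction S rule: finite_induct)
  case empty
  have "T (\<lambda>\<phi>. 0 * delta z z \<phi> + 0 * delta z z \<phi>) = (\<lambda>\<phi>. 0 * T (delta z z) \<phi> + 0 * T (delta z z) \<phi>)"
    by (rule linearization_lincomb[OF assms(1) delta_free_space delta_free_space])
  then show ?case by simp
next
  case (insert y F)
  have "(\<lambda>\<phi>. \<Sum>x\<in>F. a x * delta z x \<phi>) \<in> free_space z"
    using insert(1) by (intro delta_span_free_space) (auto simp: delta_span_def)
  from linearization_lincomb[OF assms(1) delta_free_space this, where a="a y" and b=1]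
  show ?case using insert by (simp add: linearization_delta[OF assms(1)])
qed

text \<open>Two linearizations agree on the span of \<open>\<delta>(M)\<close> and are Lipschitz, hence agree on its closure.\<close>

lemma linearization_unique:
  assumes T: "is_linearization z g T" and S: "is_linearization z g S"
  shows "T = S"
proof
  fix \<Lambda>
  show "T \<Lambda> = S \<Lambda>"
  proof (cases "\<Lambda> \<in> free_space z")
    case False
    then show ?thesis using linearization_outside[OF T] linearization_outside[OF S] by simp
  next
    case L: True
    note into = linearization_free_space[OF T, THEN free_space_Lip0_dual]
      linearization_free_space[OF S, THEN free_space_Lip0_dual]
    obtain BT BS where BT: "BT \<ge> 0" "\<And>\<Lambda> \<Gamma>. \<Lambda> \<in> free_space z \<Longrightarrow> \<Gamma> \<in> free_space z \<Longrightarrow>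
        free_dist z (T \<Lambda>) (T \<Gamma>) \<le> BT * free_dist z \<Lambda> \<Gamma>"
      and BS: "BS \<ge> 0" "\<And>\<Lambda> \<Gamma>. \<Lambda> \<in> free_space z \<Longrightarrow> \<Gamma> \<in> free_space z \<Longrightarrow>
        free_dist z (S \<Lambda>) (S \<Gamma>) \<le> BS * free_dist z \<Lambda> \<Gamma>"
      using linearization_lipschitz[OF T] linearization_lipschitz[OF S] by metis
    have "free_dist z (T \<Lambda>) (S \<Lambda>) \<le> \<epsilon>" if "\<epsilon> > 0" for \<epsilon>
    proof -
      define \<delta> where "\<delta> = \<epsilon> / (BT + BS + 1)"
      have "\<delta> > 0" using \<open>\<epsilon> > 0\<close> BT BS unfolding \<delta>_def by simp
      then obtain \<mu> where \<mu>: "\<mu> \<in> delta_span z" "free_dist z \<Lambda> \<mu> < \<delta>"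
        using L unfolding free_space_iff by blast
      have M: "\<mu> \<in> free_space z" by (rule delta_span_free_space[OF \<mu>(1)])
      have "T \<mu> = S \<mu>"
        using \<mu>(1) linearization_delta_sum[OF T] linearization_delta_sum[OF S]
        unfolding delta_span_def by auto
      then have "free_dist z (T \<Lambda>) (S \<Lambda>) \<le> free_dist z (T \<Lambda>) (T \<mu>) + free_dist z (S \<mu>) (S \<Lambda>)"
        using free_dist_triangle[OF into(1)[OF L] into(1)[OF M] into(2)[OF L]] by simp
      also have "\<dots> \<le> BT * free_dist z \<Lambda> \<mu> + BS * free_dist z \<Lambda> \<mu>"
        using BT(2)[OF L M] BS(2)[OF M L] free_dist_commute[of z \<mu> \<Lambda>] by simp
      also have "\<dots> = (BT + BS) * free_dist z \<Lambda> \<mu>" by (simp add: algebra_simps)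
      also have "\<dots> \<le> (BT + BS + 1) * \<delta>"
        using \<mu>(2) BT(1) BS(1) free_dist_nonneg[OF free_space_Lip0_dual[OF L] free_space_Lip0_dual[OF M]]
        by (intro mult_mono) auto
      also have "\<dots> = \<epsilon>" unfolding \<delta>_def using BT(1) BS(1) by simp
      finally show ?thesis .
    qed
    then have "free_dist z (T \<Lambda>) (S \<Lambda>) \<le> 0" by (rule field_le_epsilon) simp
    then show ?thesis by (rule free_dist_le_0_imp_eq[OF into[OF L]])
  qed
qed

lemma is_linearizationI:
  assumes "\<And>\<Lambda>. \<Lambda> \<in> free_space z \<Longrightarrow> T \<Lambda> \<in> free_space z"
    and "\<And>\<Lambda> \<Gamma> a b. \<Lambda> \<in> free_space z \<Longrightarrow> \<Gamma> \<in> free_space z \<Longrightarrow>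
          T (\<lambda>\<phi>. a * \<Lambda> \<phi> + b * \<Gamma> \<phi>) = (\<lambda>\<phi>. a * T \<Lambda> \<phi> + b * T \<Gamma> \<phi>)"
    and "\<And>\<Lambda>. \<Lambda> \<in> free_space z \<Longrightarrow> dual_norm z (T \<Lambda>) \<le> B * dual_norm z \<Lambda>"
    and "\<And>x. T (delta z x) = delta z (g x)"
    and "\<And>\<Lambda>. \<Lambda> \<notin> free_space z \<Longrightarrow> T \<Lambda> = (\<lambda>\<phi>. 0)"
  shows "is_linearization z g T"
  unfolding is_linearization_def using assms by blast

lemma is_linearization_pushforward:
  assumes g: "g \<in> Lip0_maps z"
  shows "is_linearization z g (\<lambda>\<Lambda>. if \<Lambda> \<in> free_space z then pushforward z g \<Lambda> else (\<lambda>\<phi>. 0))"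
proof (rule is_linearizationI[where B = "Lip g"])
  fix \<Lambda> \<Gamma> :: "('a \<Rightarrow> real) \<Rightarrow> real" and a b :: real
  assume LG: "\<Lambda> \<in> free_space z" "\<Gamma> \<in> free_space z"
  then show "(if (\<lambda>\<phi>. a * \<Lambda> \<phi> + b * \<Gamma> \<phi>) \<in> free_space z
        then pushforward z g (\<lambda>\<phi>. a * \<Lambda> \<phi> + b * \<Gamma> \<phi>) else (\<lambda>\<phi>. 0))
      = (\<lambda>\<phi>. a * (if \<Lambda> \<in> free_space z then pushforward z g \<Lambda> else (\<lambda>\<phi>. 0)) \<phi>
            + b * (if \<Gamma> \<in> free_space z then pushforward z g \<Gamma> else (\<lambda>\<phi>. 0)) \<phi>)"
    using free_space_lincomb[OF LG, of a b] by (simp add: pushforward_def fun_eq_iff)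
next
  fix \<Lambda> assume L: "\<Lambda> \<in> free_space z"
  then show "(if \<Lambda> \<in> free_space z then pushforward z g \<Lambda> else (\<lambda>\<phi>. 0)) \<in> free_space z"
    using pushforward_free_space[OF g] by simp
  have "(\<lambda>\<phi>. 0) \<in> Lip0_dual z" by (rule Lip0_dualI[where B=0]) (simp_all add: Lip0_Lip_nonneg)
  with L have "free_dist z (pushforward z g \<Lambda>) (pushforward z g (\<lambda>\<phi>. 0)) \<le> Lip g * free_dist z \<Lambda> (\<lambda>\<phi>. 0)"
    by (intro free_dist_pushforward_le[OF g free_space_Lip0_dual])
  then show "dual_norm z (if \<Lambda> \<in> free_space z then pushforward z g \<Lambda> else (\<lambda>\<phi>. 0)) \<le> Lip g * dual_norm z \<Lambda>"
    using L by (simp add: free_dist_def pushforward_def)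
qed (simp_all add: delta_free_space pushforward_delta[OF g])

lemma hat_eq_pushforward:
  assumes "g \<in> Lip0_maps z" "\<Lambda> \<in> free_space z"
  shows "hat z g \<Lambda> = pushforward z g \<Lambda>"
proof -
  have "hat z g = (\<lambda>\<Lambda>. if \<Lambda> \<in> free_space z then pushforward z g \<Lambda> else (\<lambda>\<phi>. 0))"
    unfolding hat_def'
    by (rule the_equality[where P = "is_linearization z g", OF is_linearization_pushforward[OF assms(1)]])
      (rule linearization_unique[OF _ is_linearization_pushforward[OF assms(1)]])
  then show ?thesis using assms(2) by simp
qed

lemma hat_funpow:
  assumes f: "f \<in> Lip0_maps z" and L: "\<Lambda> \<in> free_space z"
  shows "(hat z f ^^ n) \<Lambda> = pushforward z (f ^^ n) \<Lambda>"
proof (induction n)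
  case 0
  show ?case using pushforward_id[OF free_space_Lip0_dual[OF L]] by (simp add: id_def)
next
  case (Suc n)
  have "pushforward z (f ^^ n) \<Lambda> \<in> free_space z"
    by (rule pushforward_free_space[OF Lip0_maps_funpow[OF f] L])
  then show ?case
    using Suc hat_eq_pushforward[OF f] pushforward_pushforward[OF f] by (simp add: comp_def)
qed

section \<open>Completeness of the free space\<close>

lemma dual_norm_le_free_dist_add:
  assumes "\<Lambda> \<in> Lip0_dual z" "\<Gamma> \<in> Lip0_dual z"
  shows "dual_norm z \<Lambda> \<le> free_dist z \<Lambda> \<Gamma> + dual_norm z \<Gamma>"
proof (rule dual_norm_le)
  fix \<phi> assume \<phi>: "\<phi> \<in> Lip0 z" "Lip \<phi> \<le> 1"
  show "\<bar>\<Lambda> \<phi>\<bar> \<le> free_dist z \<Lambda> \<Gamma> + dual_norm z \<Gamma>"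
    using free_dist_abs_le_dist[OF assms \<phi>] Lip0_dual_abs_le_norm[OF assms(2) \<phi>] by linarith
qed

lemma Lip0_dual_pointwise_limit:
  assumes \<sigma>: "\<And>n. \<sigma> n \<in> Lip0_dual z" and K: "\<And>n. dual_norm z (\<sigma> n) \<le> K"
    and lim: "\<And>\<phi>. \<phi> \<in> Lip0 z \<Longrightarrow> (\<lambda>n. \<sigma> n \<phi>) \<longlonglongrightarrow> \<Lambda> \<phi>"
    and outside: "\<And>\<phi>. \<phi> \<notin> Lip0 z \<Longrightarrow> \<Lambda> \<phi> = 0"
  shows "\<Lambda> \<in> Lip0_dual z"
proof (rule Lip0_dualI[OF outside])
  fix \<phi> \<psi> a b assume \<phi>\<psi>: "\<phi> \<in> Lip0 z" "\<psi> \<in> Lip0 z"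
  have "(\<lambda>n. \<sigma> n (\<lambda>x. a * \<phi> x + b * \<psi> x)) \<longlonglongrightarrow> a * \<Lambda> \<phi> + b * \<Lambda> \<psi>"
    using Lip0_dual_lincomb_arg[OF \<sigma> \<phi>\<psi>] by (simp add: tendsto_intros lim \<phi>\<psi>)
  then show "\<Lambda> (\<lambda>x. a * \<phi> x + b * \<psi> x) = a * \<Lambda> \<phi> + b * \<Lambda> \<psi>"
    using lim[OF Lip0_lincomb[OF \<phi>\<psi>]] by (rule LIMSEQ_unique[rotated])
next
  fix \<phi> assume \<phi>: "\<phi> \<in> Lip0 z"
  have "\<bar>\<sigma> n \<phi>\<bar> \<le> K * Lip \<phi>" for n
    using Lip0_dual_abs_le[OF \<sigma> \<phi>] K[of n] Lip0_Lip_nonneg[OF \<phi>]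
    by (meson mult_right_mono order_trans)
  then show "\<bar>\<Lambda> \<phi>\<bar> \<le> K * Lip \<phi>"
    using lim[OF \<phi>] by (intro Lim_bounded[of "\<lambda>n. \<bar>\<sigma> n \<phi>\<bar>" _ 0]) (auto intro: tendsto_intros)
qed

lemma free_dist_le_of_pointwise_limit:
  assumes "\<Gamma> \<in> Lip0_dual z" "\<And>m. \<sigma> m \<in> Lip0_dual z" "\<Lambda> \<in> Lip0_dual z"
    and lim: "\<And>\<phi>. \<phi> \<in> Lip0 z \<Longrightarrow> (\<lambda>m. \<sigma> m \<phi>) \<longlonglongrightarrow> \<Lambda> \<phi>"
    and close: "\<And>m. m \<ge> N \<Longrightarrow> free_dist z \<Gamma> (\<sigma> m) \<le> \<epsilon>"
  shows "free_dist z \<Gamma> \<Lambda> \<le> \<epsilon>"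
proof (rule free_dist_le)
  fix \<phi> assume \<phi>: "\<phi> \<in> Lip0 z" "Lip \<phi> \<le> 1"
  have "\<forall>m\<ge>N. \<bar>\<Gamma> \<phi> - \<sigma> m \<phi>\<bar> \<le> \<epsilon>"
    using free_dist_abs_le_dist[OF assms(1,2) \<phi>] close order_trans by blast
  then show "\<bar>\<Gamma> \<phi> - \<Lambda> \<phi>\<bar> \<le> \<epsilon>"
    using lim[OF \<phi>(1)] by (intro Lim_bounded[of "\<lambda>m. \<bar>\<Gamma> \<phi> - \<sigma> m \<phi>\<bar>" _ N] tendsto_rabs tendsto_diff tendsto_const) auto
qed

lemma free_space_closed:
  assumes "\<Lambda> \<in> Lip0_dual z" "\<And>\<epsilon>. \<epsilon> > 0 \<Longrightarrow> \<exists>\<Gamma>\<in>free_space z. free_dist z \<Lambda> \<Gamma> < \<epsilon>"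
  shows "\<Lambda> \<in> free_space z"
  unfolding free_space_iff
proof (intro conjI allI impI assms(1))
  fix \<epsilon> :: real assume "\<epsilon> > 0"
  then obtain \<Gamma> where \<Gamma>: "\<Gamma> \<in> free_space z" "free_dist z \<Lambda> \<Gamma> < \<epsilon> / 2"
    using assms(2) half_gt_zero by blast
  then obtain \<mu> where \<mu>: "\<mu> \<in> delta_span z" "free_dist z \<Gamma> \<mu> < \<epsilon> / 2"
    using \<open>\<epsilon> > 0\<close> unfolding free_space_iff by (meson half_gt_zero)
  have "free_dist z \<Lambda> \<mu> \<le> free_dist z \<Lambda> \<Gamma> + free_dist z \<Gamma> \<mu>"
    by (rule free_dist_triangle[OF assms(1) free_space_Lip0_dual[OF \<Gamma>(1)] delta_span_Lip0_dual[OF \<mu>(1)]])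
  then show "\<exists>\<mu>\<in>delta_span z. free_dist z \<Lambda> \<mu> < \<epsilon>" using \<Gamma>(2) \<mu> by force
qed

lemma convergent_eval_if_Cauchy:
  assumes D: "\<And>n. \<sigma> n \<in> Lip0_dual z" and \<phi>: "\<phi> \<in> Lip0 z"
    and Cauchy: "\<And>\<epsilon>. \<epsilon> > 0 \<Longrightarrow> \<exists>N. \<forall>m\<ge>N. \<forall>n\<ge>N. free_dist z (\<sigma> m) (\<sigma> n) < \<epsilon>"
  shows "convergent (\<lambda>n. \<sigma> n \<phi>)"
proof (rule Cauchy_convergent, rule metric_CauchyI)
  fix e :: real assume "e > 0"
  have lp: "0 \<le> Lip \<phi>" by (rule Lip0_Lip_nonneg[OF \<phi>])
  obtain N where N: "\<forall>m\<ge>N. \<forall>n\<ge>N. free_dist z (\<sigma> m) (\<sigma> n) < e / (Lip \<phi> + 1)"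
    using Cauchy[of "e / (Lip \<phi> + 1)"] \<open>e > 0\<close> lp by (auto simp: add_nonneg_pos)
  have "dist (\<sigma> m \<phi>) (\<sigma> n \<phi>) < e" if "m \<ge> N" "n \<ge> N" for m n
  proof -
    have "dist (\<sigma> m \<phi>) (\<sigma> n \<phi>) \<le> free_dist z (\<sigma> m) (\<sigma> n) * Lip \<phi>"
      using free_dist_abs_le[OF D D \<phi>] by (simp add: dist_real_def)
    also have "\<dots> \<le> e / (Lip \<phi> + 1) * Lip \<phi>"
    proof (rule mult_right_mono[OF _ lp])
      show "free_dist z (\<sigma> m) (\<sigma> n) \<le> e / (Lip \<phi> + 1)" using N that less_imp_le by blast
    qed
    also have "\<dots> < e" using \<open>e > 0\<close> lp by (simp add: field_simps)
    finally show ?thesis .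
  qed
  then show "\<exists>N. \<forall>m\<ge>N. \<forall>n\<ge>N. dist (\<sigma> m \<phi>) (\<sigma> n \<phi>) < e" by blast
qed

lemma free_space_Cauchy_limit:
  fixes \<sigma> :: "nat \<Rightarrow> ('a::metric_space \<Rightarrow> real) \<Rightarrow> real"
  assumes \<sigma>: "\<And>n. \<sigma> n \<in> free_space z"
    and Cauchy: "\<And>\<epsilon>. \<epsilon> > 0 \<Longrightarrow> \<exists>N. \<forall>m\<ge>N. \<forall>n\<ge>N. free_dist z (\<sigma> m) (\<sigma> n) < \<epsilon>"
  obtains \<Lambda> where "\<Lambda> \<in> free_space z" "\<And>\<epsilon>. \<epsilon> > 0 \<Longrightarrow> \<exists>N. \<forall>n\<ge>N. free_dist z (\<sigma> n) \<Lambda> \<le> \<epsilon>"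
proof -
  have D: "\<sigma> n \<in> Lip0_dual z" for n by (rule free_space_Lip0_dual[OF \<sigma>])
  note convergent = convergent_eval_if_Cauchy[OF D _ Cauchy]
  define \<Lambda> where "\<Lambda> \<phi> = (if \<phi> \<in> Lip0 z then lim (\<lambda>n. \<sigma> n \<phi>) else 0)" for \<phi>
  have lim: "(\<lambda>n. \<sigma> n \<phi>) \<longlonglongrightarrow> \<Lambda> \<phi>" if "\<phi> \<in> Lip0 z" for \<phi>
    using convergent[OF that] that by (simp add: \<Lambda>_def convergent_LIMSEQ_iff)
  have outside: "\<Lambda> \<phi> = 0" if "\<phi> \<notin> Lip0 z" for \<phi>
    using that by (simp add: \<Lambda>_def)
  obtain N1 where N1: "\<forall>m\<ge>N1. \<forall>n\<ge>N1. free_dist z (\<sigma> m) (\<sigma> n) < 1" using Cauchy[of 1] by auto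
  text \<open>A Cauchy sequence is bounded only from some index on, so pass to a tail.\<close>
  have LD: "\<Lambda> \<in> Lip0_dual z"
  proof (rule Lip0_dual_pointwise_limit[where \<sigma> = "\<lambda>n. \<sigma> (n + N1)" and K = "1 + dual_norm z (\<sigma> N1)"])
    show "dual_norm z (\<sigma> (n + N1)) \<le> 1 + dual_norm z (\<sigma> N1)" for n
    proof -
      have "free_dist z (\<sigma> (n + N1)) (\<sigma> N1) < 1" using N1 by simp
      then show ?thesis using dual_norm_le_free_dist_add[OF D D, of "n + N1" N1] by linarith
    qed
    show "(\<lambda>n. \<sigma> (n + N1) \<phi>) \<longlonglongrightarrow> \<Lambda> \<phi>" if "\<phi> \<in> Lip0 z" for \<phi>
      using LIMSEQ_ignore_initial_segment[OF lim[OF that]] .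
  qed (use D outside in auto)
  have close: "\<exists>N. \<forall>n\<ge>N. free_dist z (\<sigma> n) \<Lambda> \<le> \<epsilon>" if \<epsilon>: "\<epsilon> > 0" for \<epsilon>
  proof -
    obtain N where N: "\<forall>m\<ge>N. \<forall>n\<ge>N. free_dist z (\<sigma> m) (\<sigma> n) < \<epsilon>" using Cauchy[OF \<epsilon>] by blast
    have "free_dist z (\<sigma> n) \<Lambda> \<le> \<epsilon>" if "n \<ge> N" for n
      using N that by (intro free_dist_le_of_pointwise_limit[OF D D LD lim, of N]) (auto intro: less_imp_le)
    then show ?thesis by blast
  qed
  have "\<Lambda> \<in> free_space z"
  proof (rule free_space_closed[OF LD])
    fix \<epsilon> :: real assume "\<epsilon> > 0"
    then obtain N where "free_dist z (\<sigma> N) \<Lambda> \<le> \<epsilon> / 2" using close[of "\<epsilon> / 2"] by auto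
    then show "\<exists>\<Gamma>\<in>free_space z. free_dist z \<Lambda> \<Gamma> < \<epsilon>"
      using \<sigma>[of N] free_dist_commute[of z \<Lambda> "\<sigma> N"] \<open>\<epsilon> > 0\<close> by force
  qed
  then show ?thesis using close by (rule that)
qed

text \<open>\<open>free_dist\<close> is only known to be nonnegative on \<open>Lip0_dual\<close>; the locale \<open>Metric_space\<close>
  requires nonnegativity everywhere, hence the clamp.\<close>

definition free_metric :: "'a::metric_space \<Rightarrow> (('a \<Rightarrow> real) \<Rightarrow> real) \<Rightarrow> (('a \<Rightarrow> real) \<Rightarrow> real) \<Rightarrow> real"
  where "free_metric z \<Lambda> \<Gamma> = max 0 (free_dist z \<Lambda> \<Gamma>)"

lemma free_metric_eq:
  assumes "\<Lambda> \<in> free_space z" "\<Gamma> \<in> free_space z"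
  shows "free_metric z \<Lambda> \<Gamma> = free_dist z \<Lambda> \<Gamma>"
  using free_dist_nonneg[OF assms[THEN free_space_Lip0_dual]] by (simp add: free_metric_def)

lemma Metric_space_free_space: "Metric_space (free_space z) (free_metric z)"
proof
  fix \<Lambda> \<Gamma> \<Theta>
  show "0 \<le> free_metric z \<Lambda> \<Gamma>" by (simp add: free_metric_def)
  show "free_metric z \<Lambda> \<Gamma> = free_metric z \<Gamma> \<Lambda>" by (simp add: free_metric_def free_dist_commute)
  assume "\<Lambda> \<in> free_space z" "\<Gamma> \<in> free_space z"
  then show "free_metric z \<Lambda> \<Gamma> = 0 \<longleftrightarrow> \<Lambda> = \<Gamma>"
    using free_dist_le_0_imp_eq[OF free_space_Lip0_dual free_space_Lip0_dual] free_dist_self free_metric_eq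
    by (metis order_refl)
  assume "\<Theta> \<in> free_space z"
  then show "free_metric z \<Lambda> \<Theta> \<le> free_metric z \<Lambda> \<Gamma> + free_metric z \<Gamma> \<Theta>"
    using \<open>\<Lambda> \<in> free_space z\<close> \<open>\<Gamma> \<in> free_space z\<close>
    by (simp add: free_metric_eq free_dist_triangle free_space_Lip0_dual)
qed

lemma mcomplete_free_space: "Metric_space.mcomplete (free_space z) (free_metric z)"
proof -
  interpret F: Metric_space "free_space z" "free_metric z" by (rule Metric_space_free_space)
  show ?thesis unfolding F.mcomplete_def
  proof (intro allI impI)
    fix \<sigma> assume "F.MCauchy \<sigma>"
    then have \<sigma>: "\<And>n. \<sigma> n \<in> free_space z" unfolding F.MCauchy_def by auto
    have "free_metric z (\<sigma> m) (\<sigma> n) = free_dist z (\<sigma> m) (\<sigma> n)" for m n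
      by (rule free_metric_eq[OF \<sigma> \<sigma>])
    with \<open>F.MCauchy \<sigma>\<close> have Cauchy: "\<And>\<epsilon>. \<epsilon> > 0 \<Longrightarrow> \<exists>N. \<forall>m\<ge>N. \<forall>n\<ge>N. free_dist z (\<sigma> m) (\<sigma> n) < \<epsilon>"
      unfolding F.MCauchy_def by simp
    obtain \<Lambda> where \<Lambda>: "\<Lambda> \<in> free_space z" "\<And>\<epsilon>. \<epsilon> > 0 \<Longrightarrow> \<exists>N. \<forall>n\<ge>N. free_dist z (\<sigma> n) \<Lambda> \<le> \<epsilon>"
      by (rule free_space_Cauchy_limit[where \<sigma> = \<sigma>]) (use \<sigma> Cauchy in blast)+
    have "limitin F.mtopology \<sigma> \<Lambda> sequentially"
      unfolding F.limit_metric_sequentially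
    proof (intro conjI allI impI \<Lambda>(1))
      fix \<epsilon> :: real assume "\<epsilon> > 0"
      then obtain N where "\<forall>n\<ge>N. free_dist z (\<sigma> n) \<Lambda> \<le> \<epsilon> / 2" using \<Lambda>(2)[of "\<epsilon> / 2"] by auto
      then show "\<exists>N. \<forall>n\<ge>N. \<sigma> n \<in> free_space z \<and> free_metric z (\<sigma> n) \<Lambda> < \<epsilon>"
        using \<sigma> \<Lambda>(1) \<open>\<epsilon> > 0\<close> by (force simp: free_metric_eq)
    qed
    then show "\<exists>\<Lambda>. limitin F.mtopology \<sigma> \<Lambda> sequentially" by blast
  qed
qed

section \<open>Uniform boundedness\<close>

lemma (in Metric_space) mcomplete_Baire_mball:
  assumes "mcomplete" "M \<noteq> {}"
    and closed: "\<And>n::nat. closedin mtopology (E n)" and cover: "M \<subseteq> (\<Union>n. E n)"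
  obtains n a r where "r > 0" "a \<in> M" "mball a r \<subseteq> E n"
proof -
  have "\<exists>n. mtopology interior_of E n \<noteq> {}"
  proof (rule ccontr)
    assume "\<nexists>n. mtopology interior_of E n \<noteq> {}"
    then have "mtopology interior_of \<Union>(range E) = {}"
      using closed by (intro metric_Baire_category_alt[OF \<open>mcomplete\<close>]) auto
    moreover have "\<Union>(range E) = M"
      using closed cover closedin_subset[of mtopology] by auto
    ultimately show False using \<open>M \<noteq> {}\<close> by (metis interior_of_topspace topspace_mtopology)
  qed
  then obtain n a where a: "a \<in> mtopology interior_of E n" by blast
  then obtain r where "r > 0" "mball a r \<subseteq> mtopology interior_of E n"
    using openin_interior_of openin_mtopology by metis
  moreover have "a \<in> M"
    using a interior_of_subset[of mtopology "E n"] closedin_subset[OF closed[of n]] by auto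
  ultimately show ?thesis using that[of r a n] interior_of_subset[of mtopology "E n"] by blast
qed

lemma closedin_free_space_bounded_on:
  assumes "\<Psi> \<subseteq> Lip0 z"
  shows "closedin (Metric_space.mtopology (free_space z) (free_metric z))
    {\<Lambda> \<in> free_space z. \<forall>\<psi>\<in>\<Psi>. \<bar>\<Lambda> \<psi>\<bar> \<le> m}"
proof -
  interpret F: Metric_space "free_space z" "free_metric z" by (rule Metric_space_free_space)
  have "continuous_map F.mtopology euclideanreal (\<lambda>\<Lambda>. \<Lambda> \<psi>)" if \<psi>: "\<psi> \<in> Lip0 z" for \<psi>
  proof -
    have lp: "0 \<le> Lip \<psi>" by (rule Lip0_Lip_nonneg[OF \<psi>])
    have "\<exists>\<delta>>0. \<forall>\<Gamma>. \<Gamma> \<in> free_space z \<and> free_metric z \<Lambda> \<Gamma> < \<delta> \<longrightarrow> dist (\<Lambda> \<psi>) (\<Gamma> \<psi>) < \<epsilon>"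
      if "\<Lambda> \<in> free_space z" "\<epsilon> > 0" for \<Lambda> \<epsilon>
    proof (intro exI conjI allI impI)
      show "\<epsilon> / (Lip \<psi> + 1) > 0" using \<open>\<epsilon> > 0\<close> lp by simp
      fix \<Gamma> assume \<Gamma>: "\<Gamma> \<in> free_space z \<and> free_metric z \<Lambda> \<Gamma> < \<epsilon> / (Lip \<psi> + 1)"
      have "dist (\<Lambda> \<psi>) (\<Gamma> \<psi>) \<le> free_dist z \<Lambda> \<Gamma> * Lip \<psi>"
        using free_dist_abs_le[OF that(1)[THEN free_space_Lip0_dual] free_space_Lip0_dual \<psi>] \<Gamma>
        by (simp add: dist_real_def)
      also have "\<dots> \<le> \<epsilon> / (Lip \<psi> + 1) * Lip \<psi>"
        using \<Gamma> free_metric_eq[OF that(1)] lp by (intro mult_right_mono) auto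
      also have "\<dots> < \<epsilon>" using \<open>\<epsilon> > 0\<close> lp by (simp add: field_simps)
      finally show "dist (\<Lambda> \<psi>) (\<Gamma> \<psi>) < \<epsilon>" .
    qed
    then show ?thesis
      using F.metric_continuous_map[OF Met_TC.Metric_space_axioms, of "\<lambda>\<Lambda>. \<Lambda> \<psi>"] by simp
  qed
  then have "closedin F.mtopology {\<Lambda> \<in> topspace F.mtopology. \<Lambda> \<psi> \<in> {-m..m}}" if "\<psi> \<in> \<Psi>" for \<psi>
    using assms that by (intro closedin_continuous_map_preimage) auto
  then have "closedin F.mtopology (free_space z \<inter> (\<Inter>\<psi>\<in>\<Psi>. {\<Lambda> \<in> free_space z. \<Lambda> \<psi> \<in> {-m..m}}))"
    by (cases "\<Psi> = {}") (auto intro!: closedin_INT simp del: atLeastAtMost_iff)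
  moreover have "free_space z \<inter> (\<Inter>\<psi>\<in>\<Psi>. {\<Lambda> \<in> free_space z. \<Lambda> \<psi> \<in> {-m..m}})
      = {\<Lambda> \<in> free_space z. \<forall>\<psi>\<in>\<Psi>. \<bar>\<Lambda> \<psi>\<bar> \<le> m}"
    by (auto simp: abs_le_iff minus_le_iff)
  ultimately show ?thesis by simp
qed

text \<open>Perturbing the centre \<open>\<Lambda>\<^sub>0\<close> of the ball by \<open>c (\<delta> x - \<delta> y)\<close>, with \<open>c\<close> chosen so that
  the perturbation has norm at most \<open>r/2\<close>, and testing against the distance to \<open>g y\<close> bounds \<open>dist (g x) (g y)\<close>.\<close>

lemma lipschitz_on_if_bounded_on_ball:
  assumes g: "g \<in> Lip0_maps z" and \<Lambda>\<^sub>0: "\<Lambda>\<^sub>0 \<in> free_space z" and "r > 0"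
    and bound: "\<And>\<Lambda> \<phi>. \<Lambda> \<in> free_space z \<Longrightarrow> free_dist z \<Lambda>\<^sub>0 \<Lambda> < r \<Longrightarrow> \<phi> \<in> Lip0 z \<Longrightarrow> Lip \<phi> \<le> 1 \<Longrightarrow>
        \<bar>\<Lambda> (\<phi> \<circ> g)\<bar> \<le> m"
  shows "(4 * m / r)-lipschitz_on UNIV g"
proof (rule lipschitz_onI)
  have "\<bar>\<Lambda>\<^sub>0 ((\<lambda>x. 0) \<circ> g)\<bar> \<le> m"
    using bound[OF \<Lambda>\<^sub>0 _ Lip0_zero] Lip_zero[where 'a='a] \<open>r > 0\<close> by (simp add: free_dist_self)
  then show "0 \<le> 4 * m / r" using \<open>r > 0\<close> by simp
  fix x y :: 'a
  show "dist (g x) (g y) \<le> 4 * m / r * dist x y"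
  proof (cases "x = y")
    case False
    define d where "d = dist x y"
    have "d > 0" using False unfolding d_def by simp
    define c where "c = r / (2 * d)"
    have "c > 0" using \<open>r > 0\<close> \<open>d > 0\<close> unfolding c_def by simp
    define \<Lambda>\<^sub>1 where "\<Lambda>\<^sub>1 = (\<lambda>\<psi>. 1 * \<Lambda>\<^sub>0 \<psi> + c * (\<lambda>\<psi>. 1 * delta z x \<psi> + (-1) * delta z y \<psi>) \<psi>)"
    have \<Lambda>\<^sub>1: "\<Lambda>\<^sub>1 \<in> free_space z"
      unfolding \<Lambda>\<^sub>1_def by (intro free_space_lincomb \<Lambda>\<^sub>0 delta_free_space)
    have "free_dist z \<Lambda>\<^sub>0 \<Lambda>\<^sub>1 \<le> c * d"
    proof (rule free_dist_le)
      fix \<psi> assume \<psi>: "\<psi> \<in> Lip0 z" "Lip \<psi> \<le> 1"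
      have "\<Lambda>\<^sub>0 \<psi> - \<Lambda>\<^sub>1 \<psi> = - (c * (\<psi> x - \<psi> y))"
        using \<psi>(1) by (simp add: \<Lambda>\<^sub>1_def delta_def algebra_simps)
      then have "\<bar>\<Lambda>\<^sub>0 \<psi> - \<Lambda>\<^sub>1 \<psi>\<bar> = c * \<bar>\<psi> x - \<psi> y\<bar>"
        using \<open>c > 0\<close> by (simp add: abs_mult)
      also have "\<dots> \<le> c * d"
        using Lip0_abs_diff_le_dist[OF \<psi>] \<open>c > 0\<close> unfolding d_def by simp
      finally show "\<bar>\<Lambda>\<^sub>0 \<psi> - \<Lambda>\<^sub>1 \<psi>\<bar> \<le> c * d" .
    qed
    also have "c * d < r" using \<open>r > 0\<close> \<open>d > 0\<close> unfolding c_def by simp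
    finally have near: "free_dist z \<Lambda>\<^sub>0 \<Lambda>\<^sub>1 < r" .
    define \<phi> where "\<phi> = (\<lambda>t. dist t (g y) - dist z (g y))"
    have \<phi>: "\<phi> \<in> Lip0 z" "Lip \<phi> \<le> 1" unfolding \<phi>_def by (rule Lip0_dist Lip_dist_le)+
    have "\<Lambda>\<^sub>1 (\<phi> \<circ> g) - \<Lambda>\<^sub>0 (\<phi> \<circ> g) = c * dist (g x) (g y)"
      using Lip0_comp[OF \<phi>(1) g] by (simp add: \<Lambda>\<^sub>1_def delta_def \<phi>_def)
    moreover have "\<bar>\<Lambda>\<^sub>1 (\<phi> \<circ> g)\<bar> \<le> m" by (rule bound[OF \<Lambda>\<^sub>1 near \<phi>])
    moreover have "\<bar>\<Lambda>\<^sub>0 (\<phi> \<circ> g)\<bar> \<le> m" by (rule bound[OF \<Lambda>\<^sub>0 _ \<phi>]) (simp add: free_dist_self \<open>r > 0\<close>)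
    ultimately have "c * dist (g x) (g y) \<le> 2 * m" by linarith
    then have "dist (g x) (g y) \<le> 2 * m / c" using \<open>c > 0\<close> by (simp add: field_simps)
    also have "\<dots> = 4 * m / r * d" using \<open>d > 0\<close> \<open>r > 0\<close> unfolding c_def by (simp add: field_simps)
    finally show ?thesis unfolding d_def .
  qed simp
qed

text \<open>The uniform boundedness principle for the family of pushforwards, via Baire's theorem.\<close>

lemma Lip_bounded_if_pointwise_bounded:
  fixes z :: "'a::metric_space"
  assumes g: "\<And>j. g j \<in> Lip0_maps z"
    and bounded: "\<And>\<Lambda>. \<Lambda> \<in> free_space z \<Longrightarrow> \<exists>K. \<forall>j. \<forall>\<phi>\<in>Lip0 z. Lip \<phi> \<le> 1 \<longrightarrow> \<bar>\<Lambda> (\<phi> \<circ> g j)\<bar> \<le> K"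
  obtains C where "C \<ge> 0" "\<And>j. Lip (g j) \<le> C"
proof -
  interpret F: Metric_space "free_space z" "free_metric z" by (rule Metric_space_free_space)
  define \<Psi> where "\<Psi> = {\<phi> \<circ> g j | \<phi> j. \<phi> \<in> Lip0 z \<and> Lip \<phi> \<le> 1}"
  define E where "E n = {\<Lambda> \<in> free_space z. \<forall>\<psi>\<in>\<Psi>. \<bar>\<Lambda> \<psi>\<bar> \<le> real n}" for n
  have "\<Psi> \<subseteq> Lip0 z" unfolding \<Psi>_def using Lip0_comp[OF _ g] by blast
  then have closed: "closedin F.mtopology (E n)" for n
    unfolding E_def by (rule closedin_free_space_bounded_on)
  have cover: "free_space z \<subseteq> (\<Union>n. E n)"
  proof
    fix \<Lambda> assume "\<Lambda> \<in> free_space z"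
    then obtain K where "\<forall>j. \<forall>\<phi>\<in>Lip0 z. Lip \<phi> \<le> 1 \<longrightarrow> \<bar>\<Lambda> (\<phi> \<circ> g j)\<bar> \<le> K" using bounded by blast
    then have "\<Lambda> \<in> E (nat \<lceil>K\<rceil>)" using \<open>\<Lambda> \<in> free_space z\<close> unfolding E_def \<Psi>_def
      by (auto intro: order_trans[OF _ real_nat_ceiling_ge])
    then show "\<Lambda> \<in> (\<Union>n. E n)" by blast
  qed
  have "free_space z \<noteq> {}" using delta_free_space by blast
  then obtain n \<Lambda>\<^sub>0 r where r: "r > 0" and \<Lambda>\<^sub>0: "\<Lambda>\<^sub>0 \<in> free_space z" and ball: "F.mball \<Lambda>\<^sub>0 r \<subseteq> E n"
    by (rule F.mcomplete_Baire_mball[OF mcomplete_free_space _ closed cover])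
  have "(4 * real n / r)-lipschitz_on UNIV (g j)" for j
  proof (rule lipschitz_on_if_bounded_on_ball[OF g \<Lambda>\<^sub>0 r])
    fix \<Lambda> \<phi> assume "\<Lambda> \<in> free_space z" "free_dist z \<Lambda>\<^sub>0 \<Lambda> < r" "\<phi> \<in> Lip0 z" "Lip \<phi> \<le> 1"
    then have "\<Lambda> \<in> E n" using ball \<Lambda>\<^sub>0 free_metric_eq[OF \<Lambda>\<^sub>0] by auto
    then show "\<bar>\<Lambda> (\<phi> \<circ> g j)\<bar> \<le> real n"
      using \<open>\<phi> \<in> Lip0 z\<close> \<open>Lip \<phi> \<le> 1\<close> unfolding E_def \<Psi>_def by blast
  qed
  then show ?thesis using r Lip_le by (intro that[of "4 * real n / r"]) auto
qed

section \<open>Rigidity\<close>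

lemma free_dist_pushforward_delta_sum_le:
  assumes "g \<in> Lip0_maps z"
  shows "free_dist z (pushforward z g (\<lambda>\<phi>. \<Sum>x\<in>S. a x * delta z x \<phi>)) (\<lambda>\<phi>. \<Sum>x\<in>S. a x * delta z x \<phi>)
    \<le> (\<Sum>x\<in>S. \<bar>a x\<bar> * dist (g x) x)"
proof (rule free_dist_le)
  fix \<phi> assume \<phi>: "\<phi> \<in> Lip0 z" "Lip \<phi> \<le> 1"
  have "pushforward z g (\<lambda>\<phi>. \<Sum>x\<in>S. a x * delta z x \<phi>) \<phi> - (\<Sum>x\<in>S. a x * delta z x \<phi>)
      = (\<Sum>x\<in>S. a x * (\<phi> (g x) - \<phi> x))"
    unfolding pushforward_delta_sum[OF assms] using \<phi>(1) by (simp add: delta_def sum_subtractf algebra_simps)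
  also have "\<bar>\<dots>\<bar> \<le> (\<Sum>x\<in>S. \<bar>a x * (\<phi> (g x) - \<phi> x)\<bar>)"
    by (rule sum_abs)
  also have "\<dots> = (\<Sum>x\<in>S. \<bar>a x\<bar> * \<bar>\<phi> (g x) - \<phi> x\<bar>)"
    by (simp add: abs_mult)
  also have "\<dots> \<le> (\<Sum>x\<in>S. \<bar>a x\<bar> * dist (g x) x)"
    using Lip0_abs_diff_le_dist[OF \<phi>] by (intro sum_mono mult_left_mono) auto
  finally show "\<bar>pushforward z g (\<lambda>\<phi>. \<Sum>x\<in>S. a x * delta z x \<phi>) \<phi> - (\<Sum>x\<in>S. a x * delta z x \<phi>)\<bar>
      \<le> (\<Sum>x\<in>S. \<bar>a x\<bar> * dist (g x) x)" .
qed

lemma free_dist_pushforward_le_approx: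
  assumes g: "g \<in> Lip0_maps z" and L: "\<Lambda> \<in> Lip0_dual z" and M: "\<mu> \<in> Lip0_dual z"
  shows "free_dist z (pushforward z g \<Lambda>) \<Lambda>
    \<le> (Lip g + 1) * free_dist z \<Lambda> \<mu> + free_dist z (pushforward z g \<mu>) \<mu>"
proof -
  have PL: "pushforward z g \<Lambda> \<in> Lip0_dual z" and PM: "pushforward z g \<mu> \<in> Lip0_dual z"
    using pushforward_Lip0_dual[OF g] L M by auto
  have "free_dist z (pushforward z g \<Lambda>) \<Lambda>
      \<le> free_dist z (pushforward z g \<Lambda>) (pushforward z g \<mu>) + free_dist z (pushforward z g \<mu>) \<mu>
        + free_dist z \<mu> \<Lambda>"
    using free_dist_triangle[OF PL PM L] free_dist_triangle[OF PM M L] by linarith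
  then show ?thesis
    using free_dist_pushforward_le[OF g L M] free_dist_commute[of z \<mu> \<Lambda>] by (simp add: algebra_simps)
qed

text \<open>An \<open>\<epsilon>/3\<close> argument: the pushforwards are equi-Lipschitz and converge on the dense span of \<open>\<delta>(M)\<close>.\<close>

lemma pushforward_tendsto_if_pointwise:
  assumes g: "\<And>j. g j \<in> Lip0_maps z" and C: "\<And>j. Lip (g j) \<le> C"
    and pointwise: "\<And>x. (\<lambda>j. g j x) \<longlonglongrightarrow> x" and L: "\<Lambda> \<in> free_space z"
  shows "(\<lambda>j. free_dist z (pushforward z (g j) \<Lambda>) \<Lambda>) \<longlonglongrightarrow> 0"
proof (rule LIMSEQ_I)
  fix r :: real assume "r > 0"
  have LL: "\<Lambda> \<in> Lip0_dual z" by (rule free_space_Lip0_dual[OF L])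
  have C0: "0 \<le> C" using Lip0_maps_Lip_nonneg[OF g] C order_trans by blast
  define \<delta> where "\<delta> = r / (2 * (C + 1))"
  have "\<delta> > 0" using \<open>r > 0\<close> C0 unfolding \<delta>_def by simp
  then obtain \<mu> where \<mu>: "\<mu> \<in> delta_span z" "free_dist z \<Lambda> \<mu> < \<delta>"
    using L unfolding free_space_iff by blast
  then obtain S a where S: "finite S" "\<mu> = (\<lambda>\<phi>. \<Sum>x\<in>S. a x * delta z x \<phi>)"
    unfolding delta_span_def by blast
  have M: "\<mu> \<in> Lip0_dual z" by (rule delta_span_Lip0_dual[OF \<mu>(1)])
  have "(\<lambda>j. \<Sum>x\<in>S. \<bar>a x\<bar> * dist (g j x) x) \<longlonglongrightarrow> (\<Sum>x\<in>S. \<bar>a x\<bar> * 0)"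
    using pointwise by (intro tendsto_intros) (simp add: tendsto_dist_iff[symmetric])
  then have "eventually (\<lambda>j. (\<Sum>x\<in>S. \<bar>a x\<bar> * dist (g j x) x) < r / 2) sequentially"
    using \<open>r > 0\<close> by (intro order_tendstoD(2)) auto
  then obtain N where N: "\<And>j. j \<ge> N \<Longrightarrow> (\<Sum>x\<in>S. \<bar>a x\<bar> * dist (g j x) x) < r / 2"
    unfolding eventually_sequentially by blast
  have "free_dist z (pushforward z (g j) \<Lambda>) \<Lambda> < r" if "j \<ge> N" for j
  proof -
    have "(Lip (g j) + 1) * free_dist z \<Lambda> \<mu> \<le> (C + 1) * \<delta>"
      using C[of j] \<mu>(2) free_dist_nonneg[OF LL M] C0 by (intro mult_mono) auto
    also have "\<dots> = r / 2" using C0 unfolding \<delta>_def by (simp add: field_simps)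
    finally have "(Lip (g j) + 1) * free_dist z \<Lambda> \<mu> \<le> r / 2" .
    moreover have "free_dist z (pushforward z (g j) \<mu>) \<mu> < r / 2"
      using free_dist_pushforward_delta_sum_le[OF g] N[OF that] unfolding S(2) by (rule le_less_trans)
    ultimately show ?thesis using free_dist_pushforward_le_approx[OF g LL M, of j] by linarith
  qed
  then show "\<exists>N. \<forall>j\<ge>N. norm (free_dist z (pushforward z (g j) \<Lambda>) \<Lambda> - 0) < r"
    using free_dist_nonneg[OF pushforward_Lip0_dual[OF g LL] LL] by auto
qed

lemma Lip_bounded_if_pushforward_tendsto:
  assumes g: "\<And>j. g j \<in> Lip0_maps z"
    and conv: "\<And>\<Lambda>. \<Lambda> \<in> free_space z \<Longrightarrow> (\<lambda>j. free_dist z (pushforward z (g j) \<Lambda>) \<Lambda>) \<longlonglongrightarrow> 0"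
  obtains C where "C \<ge> 0" "\<And>j. Lip (g j) \<le> C"
proof (rule Lip_bounded_if_pointwise_bounded[OF g])
  fix \<Lambda> assume L: "\<Lambda> \<in> free_space z"
  then have LL: "\<Lambda> \<in> Lip0_dual z" by (rule free_space_Lip0_dual)
  obtain K where K: "\<And>j. \<bar>free_dist z (pushforward z (g j) \<Lambda>) \<Lambda>\<bar> \<le> K"
    using convergent_imp_Bseq[OF convergentI[OF conv[OF L]]] unfolding Bseq_def by auto
  have "\<bar>\<Lambda> (\<phi> \<circ> g j)\<bar> \<le> K + dual_norm z \<Lambda>" if \<phi>: "\<phi> \<in> Lip0 z" "Lip \<phi> \<le> 1" for j \<phi>
  proof -
    have "\<bar>pushforward z (g j) \<Lambda> \<phi> - \<Lambda> \<phi>\<bar> \<le> free_dist z (pushforward z (g j) \<Lambda>) \<Lambda>"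
      by (rule free_dist_abs_le_dist[OF pushforward_Lip0_dual[OF g LL] LL \<phi>])
    then show ?thesis
      using K[of j] Lip0_dual_abs_le_norm[OF LL \<phi>] \<phi>(1) by (simp add: pushforward_def)
  qed
  then show "\<exists>K. \<forall>j. \<forall>\<phi>\<in>Lip0 z. Lip \<phi> \<le> 1 \<longrightarrow> \<bar>\<Lambda> (\<phi> \<circ> g j)\<bar> \<le> K" by blast
qed (rule that)

lemma pointwise_tendsto_if_pushforward_tendsto:
  assumes "\<And>j. g j \<in> Lip0_maps z"
    and "(\<lambda>j. free_dist z (pushforward z (g j) (delta z x)) (delta z x)) \<longlonglongrightarrow> 0"
  shows "(\<lambda>j. g j x) \<longlonglongrightarrow> x"
proof (rule tendsto_dist_iff[THEN iffD2])
  show "(\<lambda>j. dist (g j x) x) \<longlonglongrightarrow> 0"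
    using assms(2) by (simp add: pushforward_delta[OF assms(1)] free_dist_delta)
qed

theorem corollary3p7:
  fixes z :: "'a::complete_space" and f :: "'a \<Rightarrow> 'a"
  assumes "f \<in> Lip0_maps z"
  shows "rigid_on (free_space z) (free_dist z) (hat z f) \<longleftrightarrow>
    (\<exists>n::nat \<Rightarrow> nat. \<exists>C::real. strict_mono n \<and> C \<ge> 0 \<and>
       (\<forall>k. Lip (f ^^ n k) \<le> C) \<and> (\<forall>x. (\<lambda>k. (f ^^ n k) x) \<longlonglongrightarrow> x))"
  unfolding rigid_on_def
proof (intro iffI; elim exE conjE)
  fix n :: "nat \<Rightarrow> nat" assume "strict_mono n"
    and "\<forall>\<Lambda>\<in>free_space z. (\<lambda>j. free_dist z ((hat z f ^^ n j) \<Lambda>) \<Lambda>) \<longlonglongrightarrow> 0"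
  then have conv: "(\<lambda>j. free_dist z (pushforward z (f ^^ n j) \<Lambda>) \<Lambda>) \<longlonglongrightarrow> 0"
    if "\<Lambda> \<in> free_space z" for \<Lambda>
    using that by (simp add: hat_funpow[OF assms])
  obtain C where "C \<ge> 0" "\<And>k. Lip (f ^^ n k) \<le> C"
    using Lip_bounded_if_pushforward_tendsto[where g = "\<lambda>j. f ^^ n j", OF Lip0_maps_funpow[OF assms] conv]
    by blast
  moreover have "(\<lambda>k. (f ^^ n k) x) \<longlonglongrightarrow> x" for x
    by (rule pointwise_tendsto_if_pushforward_tendsto[OF Lip0_maps_funpow[OF assms] conv[OF delta_free_space]])
  ultimately show "\<exists>n C. strict_mono n \<and> C \<ge> 0 \<and> (\<forall>k. Lip (f ^^ n k) \<le> C) \<and> (\<forall>x. (\<lambda>k. (f ^^ n k) x) \<longlonglongrightarrow> x)"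
    using \<open>strict_mono n\<close> by blast
next
  fix n :: "nat \<Rightarrow> nat" and C :: real
  assume "strict_mono n" and C: "\<forall>k. Lip (f ^^ n k) \<le> C"
    and pointwise: "\<forall>x. (\<lambda>k. (f ^^ n k) x) \<longlonglongrightarrow> x"
  have "(\<lambda>j. free_dist z ((hat z f ^^ n j) \<Lambda>) \<Lambda>) \<longlonglongrightarrow> 0" if "\<Lambda> \<in> free_space z" for \<Lambda>
    using pushforward_tendsto_if_pointwise[where g = "\<lambda>j. f ^^ n j",
        OF Lip0_maps_funpow[OF assms] C[rule_format] pointwise[rule_format] that]
    by (simp add: hat_funpow[OF assms that])
  then show "\<exists>n. strict_mono n \<and> (\<forall>\<Lambda>\<in>free_space z. (\<lambda>j. free_dist z ((hat z f ^^ n j) \<Lambda>) \<Lambda>) \<longlonglongrightarrow> 0)"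
    using \<open>strict_mono n\<close> by blast
qed

end
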